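(* Let $M$ be a duplicial module in a pre-additive category, and define $D_n=\sum_{i=0}^{n-1}b_n\kappa_n^i:M_n\to M_{n-1}$ for $n\ge0$ (so $D_0=0$). Then for all $n\ge0$, $$d_{n-1}D_n+D_{n+1}d_n=1-\pi_n\qquad\text{and}\qquad D_{n-1}D_n=0\ (n\ge1).$$
   Context: Let $\mathcal A$ be a pre-additive category. Let $\Lambda_+$ be the category with objects $[n]$, $n\ge0$, where $\Lambda_+([m],[n])$ is the set of weakly monotone $f:\mathbb Z\to\mathbb Z$ with $f(j+m+1)=f(j)+n+1$ for all $j$ and $f(0)\ge0$. Define $\varepsilon^n_i:[n-1]\to[n]$ ($n\ge1$, $0\le i\le n$) by $\varepsilon^n_i(j)=j$ for $0\le j<i$, $j+1$ for $i\le j\le n-1$, and $\eta^n_i:[n+1]\to[n]$ ($0\le i\le n+1$) by $\eta^n_i(j)=j$ for $0\le j\le i$, $j-1$ for $i<j\le n+1$. A duplicial module is a functor $M:\Lambda_+^{op}\to\mathcal A$; $M_n=M([n])$, $\partial_{n,i}=M(\varepsilon^n_i):M_n\to M_{n-1}$, $s_{n,i}=M(\eta^n_i):M_n\to M_{n+1}$. Convention $M_{-1}=0$, maps into/out of it zero. Define $b_n=\sum_{i=0}^n(-1)^i\partial_{n,i}$ ($b_0=0$), $d_n=\sum_{i=0}^{n+1}(-1)^is_{n,i}$ ($d_{-1}=0$), the Karoubi operator $\kappa_n=(-1)^n(\partial_{n+1,0}s_{n,n+1}-s_{n-1,n}\partial_{n,0})$ (so $\kappa_0=\partial_{1,0}s_{0,1}$),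 and the Dwyer–Kan operator $\pi_n=(-1)^n\partial_{n+1,0}\kappa_{n+1}^n s_{n,n+1}$. *)

theory Defs
  imports Main
begin

record ('o, 'm) preadd_cat =
  Obj :: "'o set"
  Hom :: "'o \<Rightarrow> 'o \<Rightarrow> 'm set"
  Cmp :: "'m \<Rightarrow> 'm \<Rightarrow> 'm"   (* Cmp g f = g \<circ> f  for f : X \<rightarrow> Y, g : Y \<rightarrow> Z *)
  Idm :: "'o \<Rightarrow> 'm"
  Zer :: "'o \<Rightarrow> 'o \<Rightarrow> 'm"
  Add :: "'m \<Rightarrow> 'm \<Rightarrow> 'm"
  Neg :: "'m \<Rightarrow> 'm"

definition preadditive :: "('o, 'm, 'z) preadd_cat_scheme \<Rightarrow> bool" where
  "preadditive C \<longleftrightarrow>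
     (\<forall>X Y X' Y'. Hom C X Y \<inter> Hom C X' Y' \<noteq> {} \<longrightarrow> X = X' \<and> Y = Y') \<and>
     (\<forall>X Y. Hom C X Y \<noteq> {} \<longrightarrow> X \<in> Obj C \<and> Y \<in> Obj C) \<and>
     (\<forall>X\<in>Obj C. Idm C X \<in> Hom C X X) \<and>
     (\<forall>X\<in>Obj C. \<forall>Y\<in>Obj C. \<forall>Z\<in>Obj C. \<forall>f\<in>Hom C X Y. \<forall>g\<in>Hom C Y Z.
         Cmp C g f \<in> Hom C X Z) \<and>
     (\<forall>W\<in>Obj C. \<forall>X\<in>Obj C. \<forall>Y\<in>Obj C. \<forall>Z\<in>Obj C.
        \<forall>f\<in>Hom C W X. \<forall>g\<in>Hom C X Y. \<forall>h\<in>Hom C Y Z.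
         Cmp C h (Cmp C g f) = Cmp C (Cmp C h g) f) \<and>
     (\<forall>X\<in>Obj C. \<forall>Y\<in>Obj C. \<forall>f\<in>Hom C X Y.
         Cmp C (Idm C Y) f = f \<and> Cmp C f (Idm C X) = f) \<and>
     (\<forall>X\<in>Obj C. \<forall>Y\<in>Obj C.
         Zer C X Y \<in> Hom C X Y \<and>
         (\<forall>f\<in>Hom C X Y. \<forall>g\<in>Hom C X Y. Add C f g \<in> Hom C X Y) \<and>
         (\<forall>f\<in>Hom C X Y. Neg C f \<in> Hom C X Y) \<and>
         (\<forall>f\<in>Hom C X Y. \<forall>g\<in>Hom C X Y. \<forall>h\<in>Hom C X Y.
             Add C (Add C f g) h = Add C f (Add C g h)) \<and>
         (\<forall>f\<in>Hom C X Y. \<forall>g\<in>Hom C X Y. Add C f g = Add C g f) \<and>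
         (\<forall>f\<in>Hom C X Y. Add C f (Zer C X Y) = f) \<and>
         (\<forall>f\<in>Hom C X Y. Add C f (Neg C f) = Zer C X Y)) \<and>
     (\<forall>X\<in>Obj C. \<forall>Y\<in>Obj C. \<forall>Z\<in>Obj C.
        \<forall>f\<in>Hom C X Y. \<forall>f'\<in>Hom C X Y. \<forall>g\<in>Hom C Y Z. \<forall>g'\<in>Hom C Y Z.
          Cmp C (Add C g g') f = Add C (Cmp C g f) (Cmp C g' f) \<and>
          Cmp C g (Add C f f') = Add C (Cmp C g f) (Cmp C g f'))"

text \<open>Morphisms [m] \<rightarrow> [n] of \<Lambda>_+: weakly monotone f : Z \<rightarrow> Z with
  f(j+m+1) = f(j)+n+1 for all j and f(0) \<ge> 0.\<close>
definition lam_hom :: "nat \<Rightarrow> nat \<Rightarrow> (int \<Rightarrow> int) \<Rightarrow> bool" where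
  "lam_hom m n f \<longleftrightarrow> mono f \<and> (\<forall>j. f (j + int m + 1) = f j + int n + 1) \<and> f 0 \<ge> 0"

text \<open>Face maps \<epsilon>^n_i : [n-1] \<rightarrow> [n] (n \<ge> 1) and degeneracies \<eta>^n_i : [n+1] \<rightarrow> [n],
  given on a fundamental domain and extended by the periodicity condition.\<close>
definition eps :: "nat \<Rightarrow> nat \<Rightarrow> int \<Rightarrow> int" where
  "eps n i j = (let q = j div int n; r = j mod int n
                in (if r < int i then r else r + 1) + q * (int n + 1))"

definition eta :: "nat \<Rightarrow> nat \<Rightarrow> int \<Rightarrow> int" where
  "eta n i j = (let q = j div (int n + 2); r = j mod (int n + 2)
                in (if r \<le> int i then r else r - 1) + q * (int n + 1))"

text \<open>A duplicial module: a functor M : \<Lambda>_+^op \<rightarrow> C, given by objects Mo n = M_n and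
  Mf m n f = M(f) : M_n \<rightarrow> M_m for f : [m] \<rightarrow> [n] in \<Lambda>_+.\<close>
definition duplicial ::
  "('o, 'm, 'z) preadd_cat_scheme \<Rightarrow> (nat \<Rightarrow> 'o) \<Rightarrow> (nat \<Rightarrow> nat \<Rightarrow> (int \<Rightarrow> int) \<Rightarrow> 'm) \<Rightarrow> bool" where
  "duplicial C Mo Mf \<longleftrightarrow>
     preadditive C \<and>
     (\<forall>n. Mo n \<in> Obj C) \<and>
     (\<forall>m n f. lam_hom m n f \<longrightarrow> Mf m n f \<in> Hom C (Mo n) (Mo m)) \<and>
     (\<forall>n. Mf n n id = Idm C (Mo n)) \<and>
     (\<forall>l m n f g. lam_hom l m f \<longrightarrow> lam_hom m n g \<longrightarrow>
        Mf l n (g \<circ> f) = Cmp C (Mf l m f) (Mf m n g))"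

definition csum :: "('o, 'm, 'z) preadd_cat_scheme \<Rightarrow> 'o \<Rightarrow> 'o \<Rightarrow> (nat \<Rightarrow> 'm) \<Rightarrow> nat \<Rightarrow> 'm" where
  "csum C X Y f k = foldr (Add C) (map f [0..<k]) (Zer C X Y)"

definition csgn :: "('o, 'm, 'z) preadd_cat_scheme \<Rightarrow> nat \<Rightarrow> 'm \<Rightarrow> 'm" where
  "csgn C i f = (if even i then f else Neg C f)"

definition face where "face C Mo Mf n i = Mf (n - 1) n (eps n i)"
definition dgn where "dgn C Mo Mf n i = Mf (n + 1) n (eta n i)"

definition bop where
  "bop C Mo Mf n = csum C (Mo n) (Mo (n - 1)) (\<lambda>i. csgn C i (face C Mo Mf n i)) (n + 1)"

definition dop where
  "dop C Mo Mf n = csum C (Mo n) (Mo (n + 1)) (\<lambda>i. csgn C i (dgn C Mo Mf n i)) (n + 2)"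

definition kappa where
  "kappa C Mo Mf n = csgn C n
     (if n = 0 then Cmp C (face C Mo Mf 1 0) (dgn C Mo Mf 0 1)
      else Add C (Cmp C (face C Mo Mf (n + 1) 0) (dgn C Mo Mf n (n + 1)))
                 (Neg C (Cmp C (dgn C Mo Mf (n - 1) n) (face C Mo Mf n 0))))"

definition kpow where
  "kpow C Mo Mf n k = ((Cmp C (kappa C Mo Mf n)) ^^ k) (Idm C (Mo n))"

definition piop where
  "piop C Mo Mf n = csgn C n
     (Cmp C (face C Mo Mf (n + 1) 0) (Cmp C (kpow C Mo Mf (n + 1) n) (dgn C Mo Mf n (n + 1))))"

definition Dop where
  "Dop C Mo Mf n = csum C (Mo n) (Mo (n - 1)) (\<lambda>i. Cmp C (bop C Mo Mf n) (kpow C Mo Mf n i)) n"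

end

theory Submission
  imports Defs
begin

(*
  The simplicial identities of \<Lambda>\<^sub>+ give b b = 0, d d = 0 and b d + d b = 1 - \<kappa>
  (on M_0 the term d b is absent). As 1 - \<kappa> is built from b and d, the last identity together
  with b b = 0 and d d = 0 shows that \<kappa> commutes with b and d. Writing
  D_n = b_n (1 + \<kappa> + ... + \<kappa>^(n-1)), the equation D D = 0 follows from b b = 0, and
  d D + D d telescopes to 1 - \<kappa>^(n+1) - \<kappa>^n d b.
  It remains to show \<pi>_n = \<kappa>^(n+1) + \<kappa>^n d b. Here \<partial>_0 \<kappa>^n equals \<kappa>^n composed with the
  partial alternating sum \<partial>_0 - \<partial>_1 + ... of length n + 1, and \<kappa>^n annihilates the
  degeneracies s_0, ..., s_(n-1), so that only the last degeneracy of d survives in \<kappa>^n d.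
*)

section \<open>Preadditive categories\<close>

locale preadditive_category =
  fixes C :: "('o, 'm, 'z) preadd_cat_scheme"
  assumes preadditive: "preadditive C"
begin

abbreviation hom_comp (infixl "\<cdot>" 70) where "g \<cdot> f \<equiv> Cmp C g f"
abbreviation hom_add (infixl "\<oplus>" 65) where "f \<oplus> g \<equiv> Add C f g"
abbreviation hom_neg ("\<ominus> _" [70] 69) where "\<ominus> f \<equiv> Neg C f"

lemmas preadditive_unfolded = preadditive[unfolded preadditive_def]
lemmas objs_axiom = preadditive_unfolded[THEN conjunct2, THEN conjunct1]
lemmas id_axiom = preadditive_unfolded[THEN conjunct2, THEN conjunct2, THEN conjunct1]
lemmas cmp_axiom =
  preadditive_unfolded[THEN conjunct2, THEN conjunct2, THEN conjunct2, THEN conjunct1]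
lemmas assoc_axiom =
  preadditive_unfolded[THEN conjunct2, THEN conjunct2, THEN conjunct2, THEN conjunct2,
    THEN conjunct1]
lemmas unit_axiom =
  preadditive_unfolded[THEN conjunct2, THEN conjunct2, THEN conjunct2, THEN conjunct2,
    THEN conjunct2, THEN conjunct1]
lemmas group_axiom =
  preadditive_unfolded[THEN conjunct2, THEN conjunct2, THEN conjunct2, THEN conjunct2,
    THEN conjunct2, THEN conjunct2, THEN conjunct1]
lemmas bilinear_axiom =
  preadditive_unfolded[THEN conjunct2, THEN conjunct2, THEN conjunct2, THEN conjunct2,
    THEN conjunct2, THEN conjunct2, THEN conjunct2]

lemma hom_objs: "f \<in> Hom C X Y \<Longrightarrow> X \<in> Obj C \<and> Y \<in> Obj C"
  using objs_axiom by blast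

lemma id_hom: "X \<in> Obj C \<Longrightarrow> Idm C X \<in> Hom C X X"
  using id_axiom by blast

lemma cmp_hom: "f \<in> Hom C X Y \<Longrightarrow> g \<in> Hom C Y Z \<Longrightarrow> g \<cdot> f \<in> Hom C X Z"
  using cmp_axiom hom_objs[of f X Y] hom_objs[of g Y Z] by blast

lemma cmp_assoc:
  "f \<in> Hom C W X \<Longrightarrow> g \<in> Hom C X Y \<Longrightarrow> h \<in> Hom C Y Z \<Longrightarrow> h \<cdot> (g \<cdot> f) = h \<cdot> g \<cdot> f"
  using assoc_axiom hom_objs[of f W X] hom_objs[of g X Y] hom_objs[of h Y Z] by blast

lemma id_cmp: "f \<in> Hom C X Y \<Longrightarrow> Idm C Y \<cdot> f = f"
  using unit_axiom hom_objs[of f X Y] by blast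

lemma cmp_id: "f \<in> Hom C X Y \<Longrightarrow> f \<cdot> Idm C X = f"
  using unit_axiom hom_objs[of f X Y] by blast

lemma zero_hom: "X \<in> Obj C \<Longrightarrow> Y \<in> Obj C \<Longrightarrow> Zer C X Y \<in> Hom C X Y"
  using group_axiom by blast

lemma add_hom: "f \<in> Hom C X Y \<Longrightarrow> g \<in> Hom C X Y \<Longrightarrow> f \<oplus> g \<in> Hom C X Y"
  using group_axiom hom_objs[of f X Y] by blast

lemma neg_hom: "f \<in> Hom C X Y \<Longrightarrow> \<ominus> f \<in> Hom C X Y"
  using group_axiom hom_objs[of f X Y] by blast

lemma add_assoc:
  "f \<in> Hom C X Y \<Longrightarrow> g \<in> Hom C X Y \<Longrightarrow> h \<in> Hom C X Y \<Longrightarrow> f \<oplus> g \<oplus> h = f \<oplus> (g \<oplus> h)"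
  using group_axiom hom_objs[of f X Y] by blast

lemma add_commute: "f \<in> Hom C X Y \<Longrightarrow> g \<in> Hom C X Y \<Longrightarrow> f \<oplus> g = g \<oplus> f"
  using group_axiom hom_objs[of f X Y] by blast

lemma add_zero_right: "f \<in> Hom C X Y \<Longrightarrow> f \<oplus> Zer C X Y = f"
  using group_axiom hom_objs[of f X Y] by blast

lemma add_neg_right: "f \<in> Hom C X Y \<Longrightarrow> f \<oplus> \<ominus> f = Zer C X Y"
  using group_axiom hom_objs[of f X Y] by blast

lemma add_cmp:
  "f \<in> Hom C X Y \<Longrightarrow> g \<in> Hom C Y Z \<Longrightarrow> g' \<in> Hom C Y Z \<Longrightarrow> (g \<oplus> g') \<cdot> f = g \<cdot> f \<oplus> g' \<cdot> f"
  using bilinear_axiom hom_objs[of f X Y] hom_objs[of g Y Z] by blast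

lemma cmp_add:
  "f \<in> Hom C X Y \<Longrightarrow> f' \<in> Hom C X Y \<Longrightarrow> g \<in> Hom C Y Z \<Longrightarrow> g \<cdot> (f \<oplus> f') = g \<cdot> f \<oplus> g \<cdot> f'"
  using bilinear_axiom hom_objs[of f X Y] hom_objs[of g Y Z] by blast

lemma add_zero_left: "f \<in> Hom C X Y \<Longrightarrow> Zer C X Y \<oplus> f = f"
  using add_commute[of f X Y "Zer C X Y"] add_zero_right[of f X Y] hom_objs zero_hom by auto

lemma add_neg_left: "f \<in> Hom C X Y \<Longrightarrow> \<ominus> f \<oplus> f = Zer C X Y"
  using add_commute[OF neg_hom, of f X Y f] add_neg_right[of f X Y] by simp

lemma add_left_commute:
  "f \<in> Hom C X Y \<Longrightarrow> g \<in> Hom C X Y \<Longrightarrow> h \<in> Hom C X Y \<Longrightarrow> f \<oplus> (g \<oplus> h) = g \<oplus> (f \<oplus> h)"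
  using add_assoc[of f X Y g h] add_assoc[of g X Y f h] add_commute[of f X Y g] by simp

lemma add_left_imp_eq:
  assumes a: "a \<in> Hom C X Y" and b: "b \<in> Hom C X Y" and c: "c \<in> Hom C X Y"
    and eq: "a \<oplus> b = a \<oplus> c"
  shows "b = c"
proof -
  have "b = \<ominus> a \<oplus> a \<oplus> b" using add_neg_left[OF a] add_zero_left[OF b] by simp
  also have "\<dots> = \<ominus> a \<oplus> (a \<oplus> c)" using add_assoc[OF neg_hom[OF a] a b] eq by simp
  also have "\<dots> = c" using add_assoc[OF neg_hom[OF a] a c] add_neg_left[OF a] add_zero_left[OF c]
    by simp
  finally show ?thesis .
qed

lemma neg_unique: "a \<in> Hom C X Y \<Longrightarrow> b \<in> Hom C X Y \<Longrightarrow> a \<oplus> b = Zer C X Y \<Longrightarrow> \<ominus> a = b"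
  using add_left_imp_eq[of a X Y "\<ominus> a" b] neg_hom[of a X Y] add_neg_right[of a X Y] by simp

lemma neg_neg: "a \<in> Hom C X Y \<Longrightarrow> \<ominus> (\<ominus> a) = a"
  using neg_unique[OF neg_hom, of a X Y a] add_neg_left[of a X Y] by simp

lemma neg_zero: "X \<in> Obj C \<Longrightarrow> Y \<in> Obj C \<Longrightarrow> \<ominus> Zer C X Y = Zer C X Y"
  using neg_unique[OF zero_hom zero_hom] add_zero_right[OF zero_hom] by simp

lemma neg_add: "a \<in> Hom C X Y \<Longrightarrow> b \<in> Hom C X Y \<Longrightarrow> \<ominus> (a \<oplus> b) = \<ominus> a \<oplus> \<ominus> b"
proof (rule neg_unique)
  assume a: "a \<in> Hom C X Y" and b: "b \<in> Hom C X Y"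
  then have "a \<oplus> b \<oplus> (\<ominus> a \<oplus> \<ominus> b) = a \<oplus> (\<ominus> a \<oplus> (b \<oplus> \<ominus> b))"
    by (simp add: add_assoc add_left_commute[of b X Y "\<ominus> a"] add_hom neg_hom)
  then show "a \<oplus> b \<oplus> (\<ominus> a \<oplus> \<ominus> b) = Zer C X Y"
    using a b by (simp add: add_neg_right add_zero_right neg_hom)
qed (auto intro: add_hom neg_hom)

lemma cmp_zero:
  assumes g: "g \<in> Hom C Y Z" and X: "X \<in> Obj C"
  shows "g \<cdot> Zer C X Y = Zer C X Z"
proof -
  have z: "Zer C X Y \<in> Hom C X Y" "Zer C X Z \<in> Hom C X Z"
    using X hom_objs[OF g] zero_hom by auto
  have gz: "g \<cdot> Zer C X Y \<in> Hom C X Z" using z(1) g by (rule cmp_hom)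
  have "g \<cdot> Zer C X Y \<oplus> g \<cdot> Zer C X Y = g \<cdot> Zer C X Y \<oplus> Zer C X Z"
    using cmp_add[OF z(1) z(1) g] add_zero_right[OF z(1)] add_zero_right[OF gz] by simp
  then show ?thesis using add_left_imp_eq[OF gz gz z(2)] by simp
qed

lemma zero_cmp:
  assumes f: "f \<in> Hom C X Y" and Z: "Z \<in> Obj C"
  shows "Zer C Y Z \<cdot> f = Zer C X Z"
proof -
  have z: "Zer C Y Z \<in> Hom C Y Z" "Zer C X Z \<in> Hom C X Z"
    using Z hom_objs[OF f] zero_hom by auto
  have zf: "Zer C Y Z \<cdot> f \<in> Hom C X Z" using f z(1) by (rule cmp_hom)
  have "Zer C Y Z \<cdot> f \<oplus> Zer C Y Z \<cdot> f = Zer C Y Z \<cdot> f \<oplus> Zer C X Z"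
    using add_cmp[OF f z(1) z(1)] add_zero_right[OF z(1)] add_zero_right[OF zf] by simp
  then show ?thesis using add_left_imp_eq[OF zf zf z(2)] by simp
qed

lemma cmp_neg:
  assumes f: "f \<in> Hom C X Y" and g: "g \<in> Hom C Y Z"
  shows "g \<cdot> (\<ominus> f) = \<ominus> (g \<cdot> f)"
proof (rule neg_unique[symmetric])
  show "g \<cdot> f \<oplus> g \<cdot> (\<ominus> f) = Zer C X Z"
    using cmp_add[OF f neg_hom[OF f] g] add_neg_right[OF f] cmp_zero[OF g] hom_objs[OF f] by simp
qed (use f g in \<open>auto intro: cmp_hom[of _ X Y] neg_hom\<close>)

lemma neg_cmp:
  assumes f: "f \<in> Hom C X Y" and g: "g \<in> Hom C Y Z"
  shows "(\<ominus> g) \<cdot> f = \<ominus> (g \<cdot> f)"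
proof (rule neg_unique[symmetric])
  show "g \<cdot> f \<oplus> (\<ominus> g) \<cdot> f = Zer C X Z"
    using add_cmp[OF f g neg_hom[OF g]] add_neg_right[OF g] zero_cmp[OF f] hom_objs[OF g] by simp
qed (use f g in \<open>auto intro: cmp_hom[of _ X Y] neg_hom\<close>)

lemma add_add_add_commute:
  assumes "a \<in> Hom C X Y" "b \<in> Hom C X Y" "c \<in> Hom C X Y" "d \<in> Hom C X Y"
  shows "a \<oplus> b \<oplus> (c \<oplus> d) = a \<oplus> c \<oplus> (b \<oplus> d)"
  using assms add_assoc[of a X Y b "c \<oplus> d"] add_assoc[of a X Y c "b \<oplus> d"]
    add_left_commute[of b X Y c d] by (simp add: add_hom)

lemma neg_diff: "a \<in> Hom C X Y \<Longrightarrow> b \<in> Hom C X Y \<Longrightarrow> \<ominus> (a \<oplus> \<ominus> b) = b \<oplus> \<ominus> a"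
  by (simp add: neg_add neg_hom neg_neg add_commute[of "\<ominus> a" X Y])

lemma diff_cmp: "f \<in> Hom C X Y \<Longrightarrow> a \<in> Hom C Y Z \<Longrightarrow> b \<in> Hom C Y Z \<Longrightarrow>
  (a \<oplus> \<ominus> b) \<cdot> f = a \<cdot> f \<oplus> \<ominus> (b \<cdot> f)"
  using add_cmp[of f X Y a Z "\<ominus> b"] neg_cmp[of f X Y b Z] neg_hom[of b Y Z] by simp

lemma cmp_diff: "f \<in> Hom C X Y \<Longrightarrow> g \<in> Hom C X Y \<Longrightarrow> a \<in> Hom C Y Z \<Longrightarrow>
  a \<cdot> (f \<oplus> \<ominus> g) = a \<cdot> f \<oplus> \<ominus> (a \<cdot> g)"
  using cmp_add[of f X Y "\<ominus> g" a Z] cmp_neg[of g X Y a Z] neg_hom[of g X Y] by simp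

lemma diff_cmp_diff:
  assumes c: "c \<in> Hom C X Y" and e: "e \<in> Hom C X Y" and a: "a \<in> Hom C Y Z" and b: "b \<in> Hom C Y Z"
  shows "(a \<oplus> \<ominus> b) \<cdot> (c \<oplus> \<ominus> e) = a \<cdot> c \<oplus> \<ominus> (a \<cdot> e) \<oplus> \<ominus> (b \<cdot> c \<oplus> \<ominus> (b \<cdot> e))"
  using diff_cmp[OF add_hom[OF c neg_hom[OF e]] a b] cmp_diff[OF c e a] cmp_diff[OF c e b] by simp

lemma eq_diff_diff:
  assumes a: "a \<in> Hom C X Y" and k: "k \<in> Hom C X Y"
  shows "k = a \<oplus> \<ominus> (a \<oplus> \<ominus> k)"
proof -
  have "a \<oplus> \<ominus> (a \<oplus> \<ominus> k) = k \<oplus> (a \<oplus> \<ominus> a)"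
    using neg_diff[OF a k] add_left_commute[OF a k neg_hom[OF a]] by simp
  then show ?thesis using add_neg_right[OF a] add_zero_right[OF k] by simp
qed

lemma eq_diff_add:
  assumes a: "a \<in> Hom C X Y" and b: "b \<in> Hom C X Y" and "a \<oplus> b = c"
  shows "a = c \<oplus> \<ominus> b"
proof -
  have "c \<oplus> \<ominus> b = a \<oplus> (b \<oplus> \<ominus> b)" using assms add_assoc[OF a b neg_hom[OF b]] by simp
  then show ?thesis using add_neg_right[OF b] add_zero_right[OF a] by simp
qed

lemma add_diff_add_left_cancel:
  assumes a: "a \<in> Hom C X Y" and b: "b \<in> Hom C X Y" and c: "c \<in> Hom C X Y" and e: "e \<in> Hom C X Y"
  shows "a \<oplus> (b \<oplus> \<ominus> c \<oplus> \<ominus> (a \<oplus> e)) = b \<oplus> \<ominus> (c \<oplus> e)"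
proof -
  have bc: "b \<oplus> \<ominus> c \<in> Hom C X Y" using b c by (intro add_hom neg_hom)
  have "a \<oplus> (b \<oplus> \<ominus> c \<oplus> \<ominus> (a \<oplus> e)) = b \<oplus> \<ominus> c \<oplus> (a \<oplus> (\<ominus> a \<oplus> \<ominus> e))"
    using neg_add[OF a e] add_left_commute[OF a bc add_hom[OF neg_hom[OF a] neg_hom[OF e]]] by simp
  also have "a \<oplus> (\<ominus> a \<oplus> \<ominus> e) = \<ominus> e"
    using add_assoc[OF a neg_hom[OF a] neg_hom[OF e], symmetric] add_neg_right[OF a]
      add_zero_left[OF neg_hom[OF e]] by simp
  finally show ?thesis
    using add_assoc[OF b neg_hom[OF c] neg_hom[OF e]] neg_add[OF c e] by simp
qed

lemma diff_diff_add_cancel: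
  assumes a: "a \<in> Hom C X Y" and w: "w \<in> Hom C X Y" and t: "t \<in> Hom C X Y" and e: "e \<in> Hom C X Y"
  shows "a \<oplus> (\<ominus> w \<oplus> \<ominus> t) = a \<oplus> \<ominus> (t \<oplus> \<ominus> e) \<oplus> \<ominus> (w \<oplus> e)"
proof -
  have nt: "\<ominus> t \<in> Hom C X Y" and nw: "\<ominus> w \<in> Hom C X Y" and ne: "\<ominus> e \<in> Hom C X Y"
    using t w e neg_hom by auto
  have "a \<oplus> \<ominus> (t \<oplus> \<ominus> e) \<oplus> \<ominus> (w \<oplus> e) = a \<oplus> (\<ominus> t \<oplus> (e \<oplus> (\<ominus> w \<oplus> \<ominus> e)))"
    using neg_add[OF t ne] neg_neg[OF e] neg_add[OF w e]
      add_assoc[OF a add_hom[OF nt e] add_hom[OF nw ne]]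
      add_assoc[OF nt e add_hom[OF nw ne]] by simp
  also have "e \<oplus> (\<ominus> w \<oplus> \<ominus> e) = \<ominus> w"
    using add_left_commute[OF e nw ne] add_neg_right[OF e] add_zero_right[OF nw] by simp
  finally show ?thesis using add_commute[OF nt nw] by simp
qed

lemma diff_add_cancel: "a \<in> Hom C X Y \<Longrightarrow> b \<in> Hom C X Y \<Longrightarrow> a \<oplus> \<ominus> b \<oplus> b = a"
  by (simp add: add_assoc neg_hom add_neg_left add_zero_right)

lemma id_diff_cmp_commute:
  assumes f: "f \<in> Hom C X Y" and p: "p \<in> Hom C X X" and q: "q \<in> Hom C Y Y" and comm: "q \<cdot> f = f \<cdot> p"
  shows "(Idm C Y \<oplus> \<ominus> q) \<cdot> f = f \<cdot> (Idm C X \<oplus> \<ominus> p)"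
proof -
  have X: "X \<in> Obj C" and Y: "Y \<in> Obj C" using f hom_objs by auto
  show ?thesis
    using diff_cmp[OF f id_hom[OF Y] q] cmp_diff[OF id_hom[OF X] p f] id_cmp[OF f] cmp_id[OF f] comm
    by simp
qed

lemma diff_add_add_cancel:
  "a \<in> Hom C X Y \<Longrightarrow> e \<in> Hom C X Y \<Longrightarrow> r \<in> Hom C X Y \<Longrightarrow> a \<oplus> \<ominus> e \<oplus> (e \<oplus> r) = a \<oplus> r"
  by (simp add: add_assoc neg_hom add_hom add_assoc[of "\<ominus> e" X Y e r, symmetric] add_neg_left
    add_zero_left)

lemma foldr_add_hom: "set xs \<subseteq> Hom C X Y \<Longrightarrow> a \<in> Hom C X Y \<Longrightarrow> foldr (Add C) xs a \<in> Hom C X Y"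
  by (induction xs) (auto intro: add_hom)

lemma foldr_add_shift: "set xs \<subseteq> Hom C X Y \<Longrightarrow> a \<in> Hom C X Y \<Longrightarrow> b \<in> Hom C X Y \<Longrightarrow>
  foldr (Add C) xs (a \<oplus> b) = foldr (Add C) xs a \<oplus> b"
proof (induction xs)
  case Nil then show ?case by simp
next
  case (Cons x xs)
  then have x: "x \<in> Hom C X Y" and r: "foldr (Add C) xs a \<in> Hom C X Y" using foldr_add_hom by auto
  show ?case using Cons add_assoc[OF x r Cons.prems(3)] by simp
qed

lemma csum_0[simp]: "csum C X Y f 0 = Zer C X Y"
  by (simp add: csum_def)

lemma csum_hom: "X \<in> Obj C \<Longrightarrow> Y \<in> Obj C \<Longrightarrow> (\<And>i. i < k \<Longrightarrow> f i \<in> Hom C X Y) \<Longrightarrow>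
   csum C X Y f k \<in> Hom C X Y"
  unfolding csum_def by (rule foldr_add_hom) (auto intro: zero_hom)

lemma csum_Suc:
  assumes "X \<in> Obj C" "Y \<in> Obj C" and f: "\<And>i. i < Suc k \<Longrightarrow> f i \<in> Hom C X Y"
  shows "csum C X Y f (Suc k) = csum C X Y f k \<oplus> f k"
proof -
  have fk: "f k \<in> Hom C X Y" using f by auto
  have "csum C X Y f (Suc k) = foldr (Add C) (map f [0..<k]) (Zer C X Y \<oplus> f k)"
    using add_zero_right[OF fk] add_zero_left[OF fk] by (simp add: csum_def)
  also have "\<dots> = csum C X Y f k \<oplus> f k"
    using assms by (subst foldr_add_shift[OF _ zero_hom fk]) (auto simp: csum_def)
  finally show ?thesis .
qed

lemma csum_cong:
  assumes "\<And>i. i < k \<Longrightarrow> f i = g i"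
  shows "csum C X Y f k = csum C X Y g k"
proof -
  have "map f [0..<k] = map g [0..<k]" using assms by simp
  then show ?thesis unfolding csum_def by (rule arg_cong)
qed

lemma csum_add: "X \<in> Obj C \<Longrightarrow> Y \<in> Obj C \<Longrightarrow> (\<And>i. i < k \<Longrightarrow> f i \<in> Hom C X Y) \<Longrightarrow>
   (\<And>i. i < k \<Longrightarrow> g i \<in> Hom C X Y) \<Longrightarrow>
   csum C X Y (\<lambda>i. f i \<oplus> g i) k = csum C X Y f k \<oplus> csum C X Y g k"
proof (induction k)
  case 0 then show ?case using zero_hom add_zero_right by simp
next
  case (Suc k)
  have A: "csum C X Y f k \<in> Hom C X Y" "csum C X Y g k \<in> Hom C X Y"
    using Suc.prems by (auto intro!: csum_hom)
  have B: "f k \<in> Hom C X Y" "g k \<in> Hom C X Y" using Suc.prems by auto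
  have "csum C X Y (\<lambda>i. f i \<oplus> g i) (Suc k) =
        csum C X Y f k \<oplus> csum C X Y g k \<oplus> (f k \<oplus> g k)"
    using Suc by (subst csum_Suc) (auto intro: add_hom)
  also have "\<dots> = csum C X Y f k \<oplus> f k \<oplus> (csum C X Y g k \<oplus> g k)"
    using add_add_add_commute[OF A(1) A(2) B(1) B(2)] .
  also have "\<dots> = csum C X Y f (Suc k) \<oplus> csum C X Y g (Suc k)"
    using Suc.prems by (simp add: csum_Suc)
  finally show ?case .
qed

lemma csum_neg: "X \<in> Obj C \<Longrightarrow> Y \<in> Obj C \<Longrightarrow> (\<And>i. i < k \<Longrightarrow> f i \<in> Hom C X Y) \<Longrightarrow>
   csum C X Y (\<lambda>i. \<ominus> f i) k = \<ominus> csum C X Y f k"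
proof (induction k)
  case 0 then show ?case using neg_zero by simp
next
  case (Suc k)
  have A: "csum C X Y f k \<in> Hom C X Y" using Suc.prems by (auto intro!: csum_hom)
  have B: "f k \<in> Hom C X Y" using Suc.prems by auto
  show ?case using Suc A B by (simp add: csum_Suc neg_hom neg_add)
qed

lemma cmp_csum: "X \<in> Obj C \<Longrightarrow> Y \<in> Obj C \<Longrightarrow> (\<And>i. i < k \<Longrightarrow> f i \<in> Hom C X Y) \<Longrightarrow>
   g \<in> Hom C Y Z \<Longrightarrow>
   g \<cdot> csum C X Y f k = csum C X Z (\<lambda>i. g \<cdot> f i) k"
proof (induction k)
  case 0 then show ?case using cmp_zero by simp
next
  case (Suc k)
  have Z: "Z \<in> Obj C" using Suc.prems hom_objs by blast
  have A: "csum C X Y f k \<in> Hom C X Y" using Suc.prems by (auto intro!: csum_hom)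
  have B: "f k \<in> Hom C X Y" using Suc.prems by auto
  have C1: "\<And>i. i < Suc k \<Longrightarrow> g \<cdot> f i \<in> Hom C X Z" using Suc.prems cmp_hom by blast
  have "g \<cdot> csum C X Y f (Suc k) = g \<cdot> (csum C X Y f k \<oplus> f k)"
    using Suc.prems by (simp add: csum_Suc)
  also have "\<dots> = g \<cdot> csum C X Y f k \<oplus> g \<cdot> f k"
    using cmp_add[OF A B Suc.prems(4)] .
  also have "\<dots> = csum C X Z (\<lambda>i. g \<cdot> f i) (Suc k)"
    using Suc C1 Z by (simp add: csum_Suc)
  finally show ?case .
qed

lemma csum_cmp: "X \<in> Obj C \<Longrightarrow> Y \<in> Obj C \<Longrightarrow> (\<And>i. i < k \<Longrightarrow> g i \<in> Hom C X Y) \<Longrightarrow>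
   f \<in> Hom C W X \<Longrightarrow>
   csum C X Y g k \<cdot> f = csum C W Y (\<lambda>i. g i \<cdot> f) k"
proof (induction k)
  case 0 then show ?case using zero_cmp by simp
next
  case (Suc k)
  have W: "W \<in> Obj C" using Suc.prems hom_objs by blast
  have A: "csum C X Y g k \<in> Hom C X Y" using Suc.prems by (auto intro!: csum_hom)
  have B: "g k \<in> Hom C X Y" using Suc.prems by auto
  have C1: "\<And>i. i < Suc k \<Longrightarrow> g i \<cdot> f \<in> Hom C W Y" using Suc.prems cmp_hom by blast
  have "csum C X Y g (Suc k) \<cdot> f = (csum C X Y g k \<oplus> g k) \<cdot> f"
    using Suc.prems by (simp add: csum_Suc)
  also have "\<dots> = csum C X Y g k \<cdot> f \<oplus> g k \<cdot> f"
    using add_cmp[OF Suc.prems(4) A B] .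
  also have "\<dots> = csum C W Y (\<lambda>i. g i \<cdot> f) (Suc k)"
    using Suc C1 W by (simp add: csum_Suc)
  finally show ?case .
qed

lemma csum_split: "X \<in> Obj C \<Longrightarrow> Y \<in> Obj C \<Longrightarrow> (\<And>i. i < a + b \<Longrightarrow> f i \<in> Hom C X Y) \<Longrightarrow>
   csum C X Y f (a + b) = csum C X Y f a \<oplus> csum C X Y (\<lambda>i. f (a + i)) b"
proof (induction b)
  case 0 then show ?case using add_zero_right csum_hom by simp
next
  case (Suc b)
  have A: "csum C X Y f a \<in> Hom C X Y" using Suc.prems by (auto intro!: csum_hom)
  have A2: "csum C X Y (\<lambda>i. f (a + i)) b \<in> Hom C X Y" using Suc.prems by (auto intro!: csum_hom)
  have B: "f (a + b) \<in> Hom C X Y" using Suc.prems by auto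
  have "csum C X Y f (a + Suc b) = csum C X Y f (a + b) \<oplus> f (a + b)"
    using Suc.prems by (simp add: csum_Suc)
  also have "\<dots> = csum C X Y f a \<oplus> csum C X Y (\<lambda>i. f (a + i)) b \<oplus> f (a + b)"
    using Suc by simp
  also have "\<dots> = csum C X Y f a \<oplus> csum C X Y (\<lambda>i. f (a + i)) (Suc b)"
    using Suc.prems A A2 B by (simp add: csum_Suc add_assoc)
  finally show ?case .
qed

lemma csum_zero: "X \<in> Obj C \<Longrightarrow> Y \<in> Obj C \<Longrightarrow> (\<And>i. i < k \<Longrightarrow> f i = Zer C X Y) \<Longrightarrow>
   csum C X Y f k = Zer C X Y"
proof (induction k)
  case 0 then show ?case by simp
next
  case (Suc k)
  have "csum C X Y f (Suc k) = csum C X Y f k \<oplus> f k"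
    using Suc.prems zero_hom by (intro csum_Suc) auto
  then show ?case using Suc zero_hom add_zero_right by simp
qed

lemma csum_one: "f 0 \<in> Hom C X Y \<Longrightarrow> csum C X Y f (Suc 0) = f 0"
  using csum_Suc[of X Y 0 f] hom_objs add_zero_left by auto

lemma csum_two: "f 0 \<in> Hom C X Y \<Longrightarrow> f 1 \<in> Hom C X Y \<Longrightarrow> csum C X Y f (Suc (Suc 0)) = f 0 \<oplus> f 1"
  using csum_Suc[of X Y "Suc 0" f] csum_one[of f X Y] hom_objs[of "f 0" X Y]
  by (auto simp: less_Suc_eq)

lemma csum_Suc_shift:
  assumes "X \<in> Obj C" "Y \<in> Obj C" "\<And>i. i < Suc k \<Longrightarrow> f i \<in> Hom C X Y"
  shows "csum C X Y f (Suc k) = f 0 \<oplus> csum C X Y (\<lambda>i. f (Suc i)) k"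
  using assms csum_split[of X Y 1 k f] csum_one[of f X Y] by simp

lemma csum_telescope: "X \<in> Obj C \<Longrightarrow> Y \<in> Obj C \<Longrightarrow> (\<And>i. i \<le> k \<Longrightarrow> f i \<in> Hom C X Y) \<Longrightarrow>
   csum C X Y (\<lambda>i. f i \<oplus> \<ominus> f (Suc i)) k = f 0 \<oplus> \<ominus> f k"
proof (induction k)
  case 0 then show ?case by (simp add: add_neg_right)
next
  case (Suc k)
  have a: "f 0 \<in> Hom C X Y" "f k \<in> Hom C X Y" "f (Suc k) \<in> Hom C X Y" using Suc.prems by auto
  have "csum C X Y (\<lambda>i. f i \<oplus> \<ominus> f (Suc i)) (Suc k) =
        f 0 \<oplus> \<ominus> f k \<oplus> (f k \<oplus> \<ominus> f (Suc k))"
    using Suc by (subst csum_Suc) (auto intro!: add_hom neg_hom)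
  also have "\<dots> = f 0 \<oplus> (\<ominus> f k \<oplus> (f k \<oplus> \<ominus> f (Suc k)))"
    using a by (simp add: add_assoc neg_hom add_hom)
  also have "\<dots> = f 0 \<oplus> (\<ominus> f k \<oplus> f k \<oplus> \<ominus> f (Suc k))"
    using add_assoc[OF neg_hom[OF a(2)] a(2) neg_hom[OF a(3)]] by simp
  also have "\<dots> = f 0 \<oplus> \<ominus> f (Suc k)"
    using a by (simp add: add_neg_left add_zero_left neg_hom)
  finally show ?case .
qed

lemma csum_swap: "X \<in> Obj C \<Longrightarrow> Y \<in> Obj C \<Longrightarrow> (\<And>i j. i < k \<Longrightarrow> j < m \<Longrightarrow> F i j \<in> Hom C X Y) \<Longrightarrow>
   csum C X Y (\<lambda>i. csum C X Y (\<lambda>j. F i j) m) k = csum C X Y (\<lambda>j. csum C X Y (\<lambda>i. F i j) k) m"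
proof (induction k)
  case 0 then show ?case by (simp add: csum_zero)
next
  case (Suc k)
  have "csum C X Y (\<lambda>i. csum C X Y (\<lambda>j. F i j) m) (Suc k) =
     csum C X Y (\<lambda>i. csum C X Y (\<lambda>j. F i j) m) k \<oplus> csum C X Y (\<lambda>j. F k j) m"
    using Suc.prems by (subst csum_Suc) (auto intro!: csum_hom)
  also have "\<dots> = csum C X Y (\<lambda>j. csum C X Y (\<lambda>i. F i j) k) m \<oplus> csum C X Y (\<lambda>j. F k j) m"
    using Suc by simp
  also have "\<dots> = csum C X Y (\<lambda>j. csum C X Y (\<lambda>i. F i j) k \<oplus> F k j) m"
    using Suc.prems by (subst csum_add) (auto intro!: csum_hom)
  also have "\<dots> = csum C X Y (\<lambda>j. csum C X Y (\<lambda>i. F i j) (Suc k)) m"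
    using Suc.prems by (intro csum_cong) (simp add: csum_Suc)
  finally show ?case .
qed

lemma csum_triangle: "X \<in> Obj C \<Longrightarrow> Y \<in> Obj C \<Longrightarrow> (\<And>i j. j \<le> i \<Longrightarrow> i < N \<Longrightarrow> F i j \<in> Hom C X Y) \<Longrightarrow>
   csum C X Y (\<lambda>i. csum C X Y (\<lambda>j. F i j) (Suc i)) N =
   csum C X Y (\<lambda>j. csum C X Y (\<lambda>k. F (j + k) j) (N - j)) N"
proof (induction N)
  case 0 then show ?case by simp
next
  case (Suc N)
  have in1: "\<And>j. j < Suc N \<Longrightarrow> csum C X Y (\<lambda>k. F (j + k) j) (N - j) \<in> Hom C X Y"
    using Suc.prems by (intro csum_hom) auto
  have "csum C X Y (\<lambda>i. csum C X Y (\<lambda>j. F i j) (Suc i)) (Suc N) =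
     csum C X Y (\<lambda>i. csum C X Y (\<lambda>j. F i j) (Suc i)) N \<oplus> csum C X Y (\<lambda>j. F N j) (Suc N)"
    using Suc.prems by (subst csum_Suc) (auto intro!: csum_hom)
  also have "\<dots> =
      csum C X Y (\<lambda>j. csum C X Y (\<lambda>k. F (j + k) j) (N - j)) N \<oplus> csum C X Y (\<lambda>j. F N j) (Suc N)"
    using Suc by simp
  also have "\<dots> = csum C X Y (\<lambda>j. csum C X Y (\<lambda>k. F (j + k) j) (N - j)) (Suc N)
    \<oplus> csum C X Y (\<lambda>j. F N j) (Suc N)"
    using Suc.prems in1 add_zero_right[OF csum_hom[OF Suc.prems(1,2) in1]]
    by (subst (2) csum_Suc) auto
  also have "\<dots> = csum C X Y (\<lambda>j. csum C X Y (\<lambda>k. F (j + k) j) (N - j) \<oplus> F N j) (Suc N)"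
    using Suc.prems in1 by (subst csum_add) auto
  also have "\<dots> = csum C X Y (\<lambda>j. csum C X Y (\<lambda>k. F (j + k) j) (Suc N - j)) (Suc N)"
  proof (rule csum_cong)
    fix j assume j: "j < Suc N"
    then have e: "Suc N - j = Suc (N - j)" by simp
    show "csum C X Y (\<lambda>k. F (j + k) j) (N - j) \<oplus> F N j = csum C X Y (\<lambda>k. F (j + k) j) (Suc N - j)"
      unfolding e using Suc.prems j by (subst csum_Suc) auto
  qed
  finally show ?case .
qed

lemma csgn_hom: "f \<in> Hom C X Y \<Longrightarrow> csgn C i f \<in> Hom C X Y"
  by (simp add: csgn_def neg_hom)

lemma csgn_0[simp]: "csgn C 0 f = f"
  by (simp add: csgn_def)

lemma csgn_Suc: "f \<in> Hom C X Y \<Longrightarrow> csgn C (Suc i) f = \<ominus> csgn C i f"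
  by (simp add: csgn_def neg_neg)

lemma cmp_csgn: "f \<in> Hom C X Y \<Longrightarrow> g \<in> Hom C Y Z \<Longrightarrow> g \<cdot> csgn C i f = csgn C i (g \<cdot> f)"
  by (simp add: csgn_def cmp_neg)

lemma csgn_cmp: "f \<in> Hom C X Y \<Longrightarrow> g \<in> Hom C Y Z \<Longrightarrow> csgn C i g \<cdot> f = csgn C i (g \<cdot> f)"
  by (simp add: csgn_def neg_cmp)

lemma csgn_neg: "f \<in> Hom C X Y \<Longrightarrow> csgn C i (\<ominus> f) = \<ominus> csgn C i f"
  by (simp add: csgn_def)

lemma csgn_add_index: "f \<in> Hom C X Y \<Longrightarrow> csgn C (i + j) f = csgn C i (csgn C j f)"
  by (auto simp add: csgn_def neg_neg neg_hom)

lemma csgn_add: "a \<in> Hom C X Y \<Longrightarrow> b \<in> Hom C X Y \<Longrightarrow> csgn C i (a \<oplus> b) = csgn C i a \<oplus> csgn C i b"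
  by (simp add: csgn_def neg_add)

lemma csgn_csgn: "f \<in> Hom C X Y \<Longrightarrow> csgn C i (csgn C i f) = f"
  by (simp add: csgn_def neg_neg)

lemma csgn_zero: "X \<in> Obj C \<Longrightarrow> Y \<in> Obj C \<Longrightarrow> csgn C i (Zer C X Y) = Zer C X Y"
  by (simp add: csgn_def neg_zero)

lemma csgn_add_csgn_Suc: "x \<in> Hom C X Y \<Longrightarrow> csgn C k x \<oplus> csgn C (Suc k) x = Zer C X Y"
  by (simp add: csgn_Suc add_neg_right csgn_hom)

lemma csgn_cmp_csgn: "f \<in> Hom C X Y \<Longrightarrow> g \<in> Hom C Y Z \<Longrightarrow>
  csgn C i g \<cdot> csgn C j f = csgn C (i + j) (g \<cdot> f)"
  using csgn_cmp[OF csgn_hom[of f X Y j], of g Z i] cmp_csgn[of f X Y g Z j]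
    csgn_add_index[OF cmp_hom[of f X Y g Z], of i j] by simp

lemma csum_antisym_vanish:
  assumes X: "X \<in> Obj C" and Y: "Y \<in> Obj C"
    and G: "\<And>i j. i < N \<Longrightarrow> j < Suc N \<Longrightarrow> G i j \<in> Hom C X Y"
    and R: "\<And>i j. i < j \<Longrightarrow> j \<le> N \<Longrightarrow> G i j = \<ominus> G (j - 1) i"
  shows "csum C X Y (\<lambda>i. csum C X Y (\<lambda>j. G i j) (Suc N)) N = Zer C X Y"
proof -
  define S where "S = csum C X Y (\<lambda>j. csum C X Y (\<lambda>k. G (j + k) j) (N - j)) N"
  have Sin: "S \<in> Hom C X Y" unfolding S_def using X Y G by (intro csum_hom) auto
  have step: "csum C X Y (\<lambda>j. G i j) (Suc N) =
      csum C X Y (\<lambda>j. G i j) (Suc i) \<oplus> \<ominus> csum C X Y (\<lambda>k. G (i + k) i) (N - i)"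
    if i: "i < N" for i
  proof -
    have e: "Suc N = Suc i + (N - i)" using i by simp
    have "csum C X Y (\<lambda>j. G i j) (Suc N) =
       csum C X Y (\<lambda>j. G i j) (Suc i) \<oplus> csum C X Y (\<lambda>k. G i (Suc i + k)) (N - i)"
      unfolding e using X Y G i by (intro csum_split) auto
    also have "csum C X Y (\<lambda>k. G i (Suc i + k)) (N - i) = csum C X Y (\<lambda>k. \<ominus> G (i + k) i) (N - i)"
      using R i by (intro csum_cong) auto
    also have "\<dots> = \<ominus> csum C X Y (\<lambda>k. G (i + k) i) (N - i)"
      using X Y G i by (intro csum_neg) auto
    finally show ?thesis .
  qed
  have "csum C X Y (\<lambda>i. csum C X Y (\<lambda>j. G i j) (Suc N)) N =
     csum C X Y (\<lambda>i. csum C X Y (\<lambda>j. G i j) (Suc i) \<oplus> \<ominus> csum C X Y (\<lambda>k. G (i + k) i) (N - i)) N"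
    using step by (intro csum_cong) auto
  also have "\<dots> = csum C X Y (\<lambda>i. csum C X Y (\<lambda>j. G i j) (Suc i)) N
    \<oplus> csum C X Y (\<lambda>i. \<ominus> csum C X Y (\<lambda>k. G (i + k) i) (N - i)) N"
    using X Y G by (intro csum_add) (auto intro!: csum_hom neg_hom)
  also have "csum C X Y (\<lambda>i. csum C X Y (\<lambda>j. G i j) (Suc i)) N = S"
    unfolding S_def using X Y G by (intro csum_triangle) auto
  also have "csum C X Y (\<lambda>i. \<ominus> csum C X Y (\<lambda>k. G (i + k) i) (N - i)) N = \<ominus> S"
    unfolding S_def using X Y G by (intro csum_neg) (auto intro!: csum_hom)
  finally show ?thesis using add_neg_right[OF Sin] by simp
qed

lemma cmp_csgn_swap:
  assumes "f \<in> Hom C X Y" "g \<in> Hom C Y Z" "f' \<in> Hom C X Y'" "g' \<in> Hom C Y' Z" "g \<cdot> f = g' \<cdot> f'"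
  shows "g \<cdot> csgn C i f = csgn C i g' \<cdot> f'"
  using assms by (simp add: cmp_csgn csgn_cmp)

lemma csgn_diff_cmp_swap:
  assumes x: "x \<in> Hom C X Y" and y: "y \<in> Hom C X Y"
    and A: "A \<in> Hom C Y Y" and B: "B \<in> Hom C Y Y" and A': "A' \<in> Hom C X X" and B': "B' \<in> Hom C X X"
    and "A \<cdot> x = y \<cdot> A'" "B \<cdot> x = y \<cdot> B'"
  shows "csgn C i (A \<oplus> \<ominus> B) \<cdot> x = y \<cdot> csgn C i (A' \<oplus> \<ominus> B')"
  using csgn_cmp[OF x add_hom[OF A neg_hom[OF B]]] diff_cmp[OF x A B]
    cmp_csgn[OF add_hom[OF A' neg_hom[OF B']] y] cmp_diff[OF A' B' y] assms(7,8)
  by simp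

lemma cmp_csgn_diff_swap:
  assumes x: "x \<in> Hom C Y X" and y: "y \<in> Hom C Y X"
    and A: "A \<in> Hom C Y Y" and B: "B \<in> Hom C Y Y" and A': "A' \<in> Hom C X X" and B': "B' \<in> Hom C X X"
    and "x \<cdot> A = A' \<cdot> y" "x \<cdot> B = B' \<cdot> y"
  shows "x \<cdot> csgn C i (A \<oplus> \<ominus> B) = csgn C i (A' \<oplus> \<ominus> B') \<cdot> y"
  using cmp_csgn[OF add_hom[OF A neg_hom[OF B]] x] cmp_diff[OF A B x]
    csgn_cmp[OF y add_hom[OF A' neg_hom[OF B']]] diff_cmp[OF y A' B'] assms(7,8)
  by simp

lemma alternating_csum_cmp:
  assumes X: "X \<in> Obj C" and Y: "Y \<in> Obj C" and Z: "Z \<in> Obj C"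
    and f: "\<And>j. j < l \<Longrightarrow> f j \<in> Hom C X Y" and g: "\<And>i. i < k \<Longrightarrow> g i \<in> Hom C Y Z"
  shows "csum C Y Z (\<lambda>i. csgn C i (g i)) k \<cdot> csum C X Y (\<lambda>j. csgn C j (f j)) l =
    csum C X Z (\<lambda>i. csum C X Z (\<lambda>j. csgn C (i + j) (g i \<cdot> f j)) l) k"
proof -
  have "csum C Y Z (\<lambda>i. csgn C i (g i)) k \<cdot> csum C X Y (\<lambda>j. csgn C j (f j)) l =
    csum C X Z (\<lambda>i. csgn C i (g i) \<cdot> csum C X Y (\<lambda>j. csgn C j (f j)) l) k"
    using X Y Z f g by (intro csum_cmp) (auto intro: csgn_hom csum_hom)
  also have "\<dots> = csum C X Z (\<lambda>i. csum C X Z (\<lambda>j. csgn C (i + j) (g i \<cdot> f j)) l) k"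
  proof (rule csum_cong)
    fix i assume "i < k"
    then have gi: "csgn C i (g i) \<in> Hom C Y Z" using g csgn_hom by blast
    have "csgn C i (g i) \<cdot> csum C X Y (\<lambda>j. csgn C j (f j)) l =
      csum C X Z (\<lambda>j. csgn C i (g i) \<cdot> csgn C j (f j)) l"
      using X Y f gi by (intro cmp_csum) (auto intro: csgn_hom)
    also have "\<dots> = csum C X Z (\<lambda>j. csgn C (i + j) (g i \<cdot> f j)) l"
      using f g \<open>i < k\<close> by (intro csum_cong csgn_cmp_csgn) auto
    finally show "csgn C i (g i) \<cdot> csum C X Y (\<lambda>j. csgn C j (f j)) l =
      csum C X Z (\<lambda>j. csgn C (i + j) (g i \<cdot> f j)) l" .
  qed
  finally show ?thesis .
qed

end

section \<open>The category \<open>\<Lambda>\<^sub>+\<close>\<close>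

lemma lam_hom_shift:
  assumes P: "\<And>j. f (j + int m + 1) = f j + int n + 1"
  shows "f (j + k * (int m + 1)) = f j + k * (int n + 1)"
proof (induction k rule: int_induct[where k = 0])
  case base then show ?case by simp
next
  case (step1 i)
  have "f (j + (i + 1) * (int m + 1)) = f ((j + i * (int m + 1)) + int m + 1)"
    by (simp add: algebra_simps)
  also have "\<dots> = f (j + i * (int m + 1)) + int n + 1" using P by simp
  finally show ?case using step1 by (simp add: algebra_simps)
next
  case (step2 i)
  have "f (j + i * (int m + 1)) = f ((j + (i - 1) * (int m + 1)) + int m + 1)"
    by (simp add: algebra_simps)
  also have "\<dots> = f (j + (i - 1) * (int m + 1)) + int n + 1" using P by simp
  finally show ?case using step2 by (simp add: algebra_simps)
qed

lemma lam_hom_eqI: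
  assumes f: "lam_hom m n f" and g: "lam_hom m n g"
    and E: "\<And>x. 0 \<le> x \<Longrightarrow> x \<le> int m \<Longrightarrow> f x = g x"
  shows "f = g"
proof
  fix j
  define r where "r = j mod (int m + 1)"
  define q where "q = j div (int m + 1)"
  have j: "j = r + q * (int m + 1)" unfolding r_def q_def using mod_div_mult_eq[of j "int m + 1"]
    by simp
  have r: "0 \<le> r" "r \<le> int m" unfolding r_def
    using pos_mod_bound[of "int m + 1" j] pos_mod_sign[of "int m + 1" j] by auto
  have "f j = f r + q * (int n + 1)" unfolding j
    by (rule lam_hom_shift) (use f in \<open>simp add: lam_hom_def\<close>)
  moreover have "g j = g r + q * (int n + 1)" unfolding j
    by (rule lam_hom_shift) (use g in \<open>simp add: lam_hom_def\<close>)
  ultimately show "f j = g j" using E[OF r] by simp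
qed

lemma lam_hom_comp: "lam_hom l m f \<Longrightarrow> lam_hom m n g \<Longrightarrow> lam_hom l n (g \<circ> f)"
  unfolding lam_hom_def mono_def by (auto simp: add.assoc) (meson order_trans)

lemma lam_hom_id: "lam_hom n n id"
  unfolding lam_hom_def by (simp add: mono_def)

lemma mono_periodic_ext:
  fixes g :: "int \<Rightarrow> int"
  assumes p: "0 < p"
    and mono: "\<And>r r'. 0 \<le> r \<Longrightarrow> r \<le> r' \<Longrightarrow> r' < p \<Longrightarrow> g r \<le> g r'"
    and bnd: "\<And>r. 0 \<le> r \<Longrightarrow> r < p \<Longrightarrow> 0 \<le> g r \<and> g r \<le> q"
  shows "mono (\<lambda>j. g (j mod p) + j div p * q)"
proof (rule monoI)
  fix j j' :: int assume "j \<le> j'"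
  have r: "0 \<le> j mod p" "j mod p < p" "0 \<le> j' mod p" "j' mod p < p"
    using p by simp_all
  show "g (j mod p) + j div p * q \<le> g (j' mod p) + j' div p * q"
  proof (cases "j div p = j' div p")
    case True
    then have "j mod p \<le> j' mod p"
      using \<open>j \<le> j'\<close> div_mult_mod_eq[of j p] div_mult_mod_eq[of j' p] unfolding True by linarith
    then show ?thesis using True mono r by simp
  next
    case False
    then have "j div p + 1 \<le> j' div p" using \<open>j \<le> j'\<close> p zdiv_mono1 by fastforce
    then have "(j div p + 1) * q \<le> j' div p * q" using bnd[of 0] p by (intro mult_right_mono) auto
    moreover have "g (j mod p) \<le> q" "0 \<le> g (j' mod p)" using bnd r by auto
    ultimately show ?thesis by (simp add: algebra_simps)
  qed
qed

lemma lam_hom_periodic_ext: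
  assumes p: "p = int m + 1" and q: "q = int n + 1"
    and mono: "\<And>r r'. 0 \<le> r \<Longrightarrow> r \<le> r' \<Longrightarrow> r' \<le> int m \<Longrightarrow> g r \<le> g r'"
    and bnd: "\<And>r. 0 \<le> r \<Longrightarrow> r \<le> int m \<Longrightarrow> 0 \<le> g r \<and> g r \<le> int n + 1"
  shows "lam_hom m n (\<lambda>j. g (j mod p) + j div p * q)"
  unfolding lam_hom_def
proof (intro conjI allI)
  show "mono (\<lambda>j. g (j mod p) + j div p * q)"
    using mono bnd unfolding p q by (intro mono_periodic_ext) auto
next
  fix j
  have "(j + int m + 1) mod p = j mod p" "(j + int m + 1) div p = j div p + 1"
    unfolding p by (simp_all add: add.assoc div_add_self2)
  then show
    "g ((j + int m + 1) mod p) + (j + int m + 1) div p * q = g (j mod p) + j div p * q + int n + 1"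
    unfolding q by (simp add: algebra_simps)
qed (use bnd[of 0] p in simp)

lemma lam_hom_eps: "i \<le> Suc k \<Longrightarrow> lam_hom k (Suc k) (eps (Suc k) i)"
  unfolding eps_def Let_def by (rule lam_hom_periodic_ext) auto

lemma lam_hom_eta: "i \<le> Suc n \<Longrightarrow> lam_hom (Suc n) n (eta n i)"
  unfolding eta_def Let_def by (rule lam_hom_periodic_ext) auto

lemma eps_eq: "0 \<le> x \<Longrightarrow> x < int n \<Longrightarrow> eps n i x = (if x < int i then x else x + 1)"
  unfolding eps_def by (simp add: Let_def)

lemma eps_top: "0 < n \<Longrightarrow> eps n i (int n) = (if 0 < i then int n + 1 else int n + 2)"
  unfolding eps_def by (simp add: Let_def)

lemma eta_eq: "0 \<le> x \<Longrightarrow> x \<le> int n + 1 \<Longrightarrow> eta n i x = (if x \<le> int i then x else x - 1)"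
  unfolding eta_def by (simp add: Let_def)

lemma eta_top: "eta n i (int n + 2) = int n + 1"
  unfolding eta_def by (simp add: Let_def)

lemma eps_eps:
  assumes "i < j" "j \<le> n + 2"
  shows "eps (Suc (Suc n)) j \<circ> eps (Suc n) i = eps (Suc (Suc n)) i \<circ> eps (Suc n) (j - 1)"
proof (rule lam_hom_eqI[where m = n and n = "Suc (Suc n)"])
  show "lam_hom n (Suc (Suc n)) (eps (Suc (Suc n)) j \<circ> eps (Suc n) i)"
    using assms by (intro lam_hom_comp[where m="Suc n"] lam_hom_eps) auto
  show "lam_hom n (Suc (Suc n)) (eps (Suc (Suc n)) i \<circ> eps (Suc n) (j - 1))"
    using assms by (intro lam_hom_comp[where m="Suc n"] lam_hom_eps) auto
  fix x :: int assume x: "0 \<le> x" "x \<le> int n"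
  show "(eps (Suc (Suc n)) j \<circ> eps (Suc n) i) x = (eps (Suc (Suc n)) i \<circ> eps (Suc n) (j - 1)) x"
    using assms x by (auto simp: eps_eq)
qed

lemma eta_eps_less:
  assumes "i < j" "j \<le> n + 2" "\<not> (i = 0 \<and> j = n + 2)"
  shows "eta (Suc n) j \<circ> eps (Suc (Suc n)) i = eps (Suc n) i \<circ> eta n (j - 1)"
proof (rule lam_hom_eqI[where m = "Suc n" and n = "Suc n"])
  show "lam_hom (Suc n) (Suc n) (eta (Suc n) j \<circ> eps (Suc (Suc n)) i)"
    using assms by (intro lam_hom_comp[where m="Suc (Suc n)"] lam_hom_eps lam_hom_eta) auto
  show "lam_hom (Suc n) (Suc n) (eps (Suc n) i \<circ> eta n (j - 1))"
    using assms by (intro lam_hom_comp[where m="n"] lam_hom_eps lam_hom_eta) auto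
  fix x :: int assume x: "0 \<le> x" "x \<le> int (Suc n)"
  show "(eta (Suc n) j \<circ> eps (Suc (Suc n)) i) x = (eps (Suc n) i \<circ> eta n (j - 1)) x"
  proof (cases "x = int (Suc n)")
    case True
    have en: "eps (Suc n) k (1 + int n) = (if 0 < k then int n + 2 else int n + 3)" for k
      using eps_top[of "Suc n" k] by simp
    show ?thesis using True assms x en by (auto simp: eps_eq eta_eq)
  next
    case False
    then show ?thesis using assms x by (auto simp: eps_eq eta_eq)
  qed
qed

lemma eta_eps_id:
  assumes "j \<le> i" "i \<le> Suc j" "i \<le> Suc n"
  shows "eta n j \<circ> eps (Suc n) i = id"
proof (rule lam_hom_eqI[where m = n and n = n])
  show "lam_hom n n (eta n j \<circ> eps (Suc n) i)"
    using assms by (intro lam_hom_comp[where m="Suc n"] lam_hom_eps lam_hom_eta) auto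
  show "lam_hom n n id" by (rule lam_hom_id)
  fix x :: int assume x: "0 \<le> x" "x \<le> int n"
  show "(eta n j \<circ> eps (Suc n) i) x = id x"
    using assms x by (auto simp: eps_eq eta_eq)
qed

lemma eta_eps_greater:
  assumes "Suc j < i" "i \<le> n + 2"
  shows "eta (Suc n) j \<circ> eps (Suc (Suc n)) i = eps (Suc n) (i - 1) \<circ> eta n j"
proof (rule lam_hom_eqI[where m = "Suc n" and n = "Suc n"])
  show "lam_hom (Suc n) (Suc n) (eta (Suc n) j \<circ> eps (Suc (Suc n)) i)"
    using assms by (intro lam_hom_comp[where m="Suc (Suc n)"] lam_hom_eps lam_hom_eta) auto
  show "lam_hom (Suc n) (Suc n) (eps (Suc n) (i - 1) \<circ> eta n j)"
    using assms by (intro lam_hom_comp[where m="n"] lam_hom_eps lam_hom_eta) auto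
  fix x :: int assume x: "0 \<le> x" "x \<le> int (Suc n)"
  show "(eta (Suc n) j \<circ> eps (Suc (Suc n)) i) x = (eps (Suc n) (i - 1) \<circ> eta n j) x"
  proof (cases "x = int (Suc n)")
    case True
    have en: "eps (Suc n) k (1 + int n) = (if 0 < k then int n + 2 else int n + 3)" for k
      using eps_top[of "Suc n" k] by simp
    show ?thesis using True assms x en by (auto simp: eps_eq eta_eq)
  next
    case False
    then show ?thesis using assms x by (auto simp: eps_eq eta_eq)
  qed
qed

lemma eta_eta:
  assumes "i < j" "j \<le> n + 2"
  shows "eta n i \<circ> eta (Suc n) j = eta n (j - 1) \<circ> eta (Suc n) i"
proof (rule lam_hom_eqI[where m = "Suc (Suc n)" and n = n])
  show "lam_hom (Suc (Suc n)) n (eta n i \<circ> eta (Suc n) j)"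
    using assms by (intro lam_hom_comp[where m="Suc n"] lam_hom_eta) auto
  show "lam_hom (Suc (Suc n)) n (eta n (j - 1) \<circ> eta (Suc n) i)"
    using assms by (intro lam_hom_comp[where m="Suc n"] lam_hom_eta) auto
  fix x :: int assume x: "0 \<le> x" "x \<le> int (Suc (Suc n))"
  show "(eta n i \<circ> eta (Suc n) j) x = (eta n (j - 1) \<circ> eta (Suc n) i) x"
  proof (cases "x = int n + 2")
    case True
    then show ?thesis using assms x by (auto simp: eta_eq eta_top)
  next
    case False
    then show ?thesis using assms x by (auto simp: eta_eq)
  qed
qed

section \<open>Duplicial modules\<close>

locale duplicial_module = preadditive_category C for C :: "('o, 'm, 'z) preadd_cat_scheme" +
  fixes Mo :: "nat \<Rightarrow> 'o" and Mf :: "nat \<Rightarrow> nat \<Rightarrow> (int \<Rightarrow> int) \<Rightarrow> 'm"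
  assumes duplicial: "duplicial C Mo Mf"
begin

abbreviation face_M ("\<partial>") where "\<partial> \<equiv> face C Mo Mf"
abbreviation s where "s \<equiv> dgn C Mo Mf"
abbreviation b where "b \<equiv> bop C Mo Mf"
abbreviation d where "d \<equiv> dop C Mo Mf"
abbreviation \<kappa> where "\<kappa> \<equiv> kappa C Mo Mf"
abbreviation \<kappa>pow where "\<kappa>pow \<equiv> kpow C Mo Mf"
abbreviation \<pi> where "\<pi> \<equiv> piop C Mo Mf"
abbreviation D where "D \<equiv> Dop C Mo Mf"
abbreviation one_M ("\<one>") where "\<one> n \<equiv> Idm C (Mo n)"
abbreviation zero_M ("\<zero>") where "\<zero> m n \<equiv> Zer C (Mo m) (Mo n)"

lemma Mo_obj [simp]: "Mo n \<in> Obj C"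
  using duplicial unfolding duplicial_def by blast

lemma Mf_hom: "lam_hom m n f \<Longrightarrow> Mf m n f \<in> Hom C (Mo n) (Mo m)"
  using duplicial unfolding duplicial_def by blast

lemma Mf_id: "Mf n n id = \<one> n"
  using duplicial unfolding duplicial_def by blast

lemma Mf_comp: "lam_hom l m f \<Longrightarrow> lam_hom m n g \<Longrightarrow> Mf l m f \<cdot> Mf m n g = Mf l n (g \<circ> f)"
  using duplicial unfolding duplicial_def by (metis (no_types))

lemma Mf_comp_eq:
  assumes "lam_hom l m f" "lam_hom m n g" "lam_hom l m' f'" "lam_hom m' n g'" "g \<circ> f = g' \<circ> f'"
  shows "Mf l m f \<cdot> Mf m n g = Mf l m' f' \<cdot> Mf m' n g'"
  using assms by (simp add: Mf_comp)

lemma face_eq: "\<partial> (Suc n) i = Mf n (Suc n) (eps (Suc n) i)"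
  unfolding face_def by simp

lemma dgn_eq: "s n i = Mf (Suc n) n (eta n i)"
  unfolding dgn_def by simp

lemma face_hom [simp]: "i \<le> Suc n \<Longrightarrow> \<partial> (Suc n) i \<in> Hom C (Mo (Suc n)) (Mo n)"
  unfolding face_eq by (simp add: Mf_hom lam_hom_eps)

lemma dgn_hom [simp]: "i \<le> Suc n \<Longrightarrow> s n i \<in> Hom C (Mo n) (Mo (Suc n))"
  unfolding dgn_eq by (simp add: Mf_hom lam_hom_eta)

lemma one_hom [simp]: "\<one> n \<in> Hom C (Mo n) (Mo n)"
  by (simp add: id_hom)

lemma face_face:
  assumes "i < j" "j \<le> n + 2"
  shows "\<partial> (Suc n) i \<cdot> \<partial> (Suc (Suc n)) j = \<partial> (Suc n) (j - 1) \<cdot> \<partial> (Suc (Suc n)) i"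
  unfolding face_eq using assms eps_eps by (intro Mf_comp_eq lam_hom_eps) auto

lemma face_dgn_less:
  assumes "i < j" "j \<le> n + 2" "\<not> (i = 0 \<and> j = n + 2)"
  shows "\<partial> (Suc (Suc n)) i \<cdot> s (Suc n) j = s n (j - 1) \<cdot> \<partial> (Suc n) i"
  unfolding face_eq dgn_eq using assms eta_eps_less
  by (intro Mf_comp_eq lam_hom_eps lam_hom_eta) auto

lemma face_dgn_greater:
  assumes "Suc j < i" "i \<le> n + 2"
  shows "\<partial> (Suc (Suc n)) i \<cdot> s (Suc n) j = s n j \<cdot> \<partial> (Suc n) (i - 1)"
  unfolding face_eq dgn_eq using assms eta_eps_greater
  by (intro Mf_comp_eq lam_hom_eps lam_hom_eta) auto

lemma face_dgn_id:
  assumes "j \<le> i" "i \<le> Suc j" "i \<le> Suc n"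
  shows "\<partial> (Suc n) i \<cdot> s n j = \<one> n"
  using assms eta_eps_id[of j i n] Mf_id
  by (simp add: face_eq dgn_eq Mf_comp lam_hom_eps lam_hom_eta)

lemma dgn_dgn:
  assumes "i < j" "j \<le> n + 2"
  shows "s (Suc n) j \<cdot> s n i = s (Suc n) i \<cdot> s n (j - 1)"
  unfolding dgn_eq using assms eta_eta by (intro Mf_comp_eq lam_hom_eta) auto

abbreviation \<tau> where "\<tau> n \<equiv> \<partial> (Suc n) 0 \<cdot> s n (Suc n)"

lemma bop_eq: "b (Suc n) = csum C (Mo (Suc n)) (Mo n) (\<lambda>i. csgn C i (\<partial> (Suc n) i)) (Suc (Suc n))"
  unfolding bop_def by simp

lemma dop_eq: "d n = csum C (Mo n) (Mo (Suc n)) (\<lambda>i. csgn C i (s n i)) (Suc (Suc n))"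
  unfolding dop_def by simp

lemma bop_hom [simp]: "b (Suc n) \<in> Hom C (Mo (Suc n)) (Mo n)"
  unfolding bop_eq by (rule csum_hom) (auto intro: csgn_hom)

lemma dop_hom [simp]: "d n \<in> Hom C (Mo n) (Mo (Suc n))"
  unfolding dop_eq by (rule csum_hom) (auto intro: csgn_hom)

lemma tau_hom [simp]: "\<tau> n \<in> Hom C (Mo n) (Mo n)"
  by (rule cmp_hom[where Y="Mo (Suc n)"]) auto

lemma dgn_face_hom [simp]: "s m (Suc m) \<cdot> \<partial> (Suc m) 0 \<in> Hom C (Mo (Suc m)) (Mo (Suc m))"
  by (rule cmp_hom[where Y="Mo m"]) auto

lemma kappa_0: "\<kappa> 0 = \<tau> 0"
  unfolding kappa_def by simp

lemma kappa_Suc: "\<kappa> (Suc m) = csgn C (Suc m) (\<tau> (Suc m) \<oplus> \<ominus> (s m (Suc m) \<cdot> \<partial> (Suc m) 0))"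
  unfolding kappa_def by simp

lemma kappa_hom [simp]: "\<kappa> n \<in> Hom C (Mo n) (Mo n)"
  by (cases n) (auto simp: kappa_0 kappa_Suc intro!: csgn_hom add_hom neg_hom)

lemma kpow_0 [simp]: "\<kappa>pow n 0 = \<one> n"
  unfolding kpow_def by simp

lemma kpow_Suc: "\<kappa>pow n (Suc k) = \<kappa> n \<cdot> \<kappa>pow n k"
  unfolding kpow_def by simp

lemma kpow_hom [simp]: "\<kappa>pow n k \<in> Hom C (Mo n) (Mo n)"
  by (induction k) (auto simp: kpow_Suc intro: cmp_hom)

lemma kpow_Suc_right: "\<kappa>pow n (Suc k) = \<kappa>pow n k \<cdot> \<kappa> n"
proof (induction k)
  case 0 then show ?case by (simp add: kpow_Suc id_cmp[OF kappa_hom] cmp_id[OF kappa_hom])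
next
  case (Suc k)
  then have "\<kappa>pow n (Suc (Suc k)) = \<kappa> n \<cdot> (\<kappa>pow n k \<cdot> \<kappa> n)"
    by (simp add: kpow_Suc)
  also have "\<dots> = \<kappa>pow n (Suc k) \<cdot> \<kappa> n"
    by (simp add: cmp_assoc[of _ "Mo n" "Mo n" _ "Mo n" _ "Mo n"] kpow_Suc)
  finally show ?case .
qed

lemma bop_bop: "b (Suc n) \<cdot> b (Suc (Suc n)) = \<zero> (Suc (Suc n)) n"
proof -
  define G where "G i j = csgn C (i + j) (\<partial> (Suc n) i \<cdot> \<partial> (Suc (Suc n)) j)" for i j
  have G_hom: "G i j \<in> Hom C (Mo (Suc (Suc n))) (Mo n)" if "i \<le> Suc n" "j \<le> Suc (Suc n)" for i j
    unfolding G_def using that by (auto intro!: csgn_hom cmp_hom[where Y="Mo (Suc n)"])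
  have "b (Suc n) \<cdot> b (Suc (Suc n)) =
    csum C (Mo (Suc (Suc n))) (Mo n)
    (\<lambda>i. csum C (Mo (Suc (Suc n))) (Mo n) (G i) (Suc (Suc (Suc n)))) (Suc (Suc n))"
    unfolding bop_eq G_def by (rule alternating_csum_cmp) auto
  also have "\<dots> = \<zero> (Suc (Suc n)) n"
  proof (rule csum_antisym_vanish)
    show "G i j = \<ominus> G (j - 1) i" if "i < j" "j \<le> Suc (Suc n)" for i j
    proof -
      obtain j' where j: "j = Suc j'" using \<open>i < j\<close> by (cases j) auto
      have "\<partial> (Suc n) j' \<cdot> \<partial> (Suc (Suc n)) i \<in> Hom C (Mo (Suc (Suc n))) (Mo n)"
        using that j by (auto intro!: cmp_hom[where Y="Mo (Suc n)"])
      then show ?thesis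
        using that face_face[of i j n] by (simp add: G_def j csgn_Suc add.commute)
    qed
  qed (auto intro: G_hom)
  finally show ?thesis .
qed

lemma dop_dop: "d (Suc n) \<cdot> d n = \<zero> n (Suc (Suc n))"
proof -
  define G where "G j i = csgn C (i + j) (s (Suc n) i \<cdot> s n j)" for i j
  have G_hom: "G j i \<in> Hom C (Mo n) (Mo (Suc (Suc n)))" if "j \<le> Suc n" "i \<le> Suc (Suc n)" for i j
    unfolding G_def using that by (auto intro!: csgn_hom cmp_hom[where Y="Mo (Suc n)"])
  have "d (Suc n) \<cdot> d n =
    csum C (Mo n) (Mo (Suc (Suc n)))
    (\<lambda>i. csum C (Mo n) (Mo (Suc (Suc n))) (\<lambda>j. G j i) (Suc (Suc n))) (Suc (Suc (Suc n)))"
    unfolding dop_eq G_def by (rule alternating_csum_cmp) auto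
  also have "\<dots> =
      csum C (Mo n) (Mo (Suc (Suc n)))
    (\<lambda>j. csum C (Mo n) (Mo (Suc (Suc n))) (G j) (Suc (Suc (Suc n)))) (Suc (Suc n))"
    by (rule csum_swap[symmetric]) (auto intro: G_hom)
  also have "\<dots> = \<zero> n (Suc (Suc n))"
  proof (rule csum_antisym_vanish)
    show "G j i = \<ominus> G (i - 1) j" if "j < i" "i \<le> Suc (Suc n)" for i j
    proof -
      obtain i' where i: "i = Suc i'" using \<open>j < i\<close> by (cases i) auto
      have "s (Suc n) j \<cdot> s n i' \<in> Hom C (Mo n) (Mo (Suc (Suc n)))"
        using that i by (auto intro!: cmp_hom[where Y="Mo (Suc n)"])
      then show ?thesis
        using that dgn_dgn[of j i n] by (simp add: G_def i csgn_Suc add.commute)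
    qed
  qed (auto intro: G_hom)
  finally show ?thesis .
qed

lemma bop_dop_0: "b (Suc 0) \<cdot> d 0 = \<one> 0 \<oplus> \<ominus> \<kappa> 0"
proof -
  have b: "b (Suc 0) = \<partial> 1 0 \<oplus> \<ominus> \<partial> 1 1"
    using bop_eq[of 0] csum_two[of "\<lambda>i. csgn C i (\<partial> 1 i)" "Mo 1" "Mo 0"]
    by (simp add: csgn_def neg_hom)
  have d: "d 0 = s 0 0 \<oplus> \<ominus> s 0 1"
    using dop_eq[of 0] csum_two[of "\<lambda>i. csgn C i (s 0 i)" "Mo 0" "Mo 1"]
    by (simp add: csgn_def neg_hom)
  have "\<partial> 1 0 \<cdot> s 0 0 = \<one> 0" "\<partial> 1 1 \<cdot> s 0 0 = \<one> 0" "\<partial> 1 1 \<cdot> s 0 1 = \<one> 0"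
    using face_dgn_id[of 0 0 0] face_dgn_id[of 0 1 0] face_dgn_id[of 1 1 0] by auto
  then show ?thesis unfolding b d kappa_0
    by (simp add: diff_cmp_diff[where X="Mo 0" and Y="Mo 1" and Z="Mo 0"] add_neg_right[OF one_hom]
      neg_zero add_zero_right[OF add_hom[OF one_hom neg_hom[OF tau_hom]]])
qed

subsection \<open>The identity \<open>b d + d b = 1 - \<kappa>\<close>\<close>

definition dgn_sum :: "nat \<Rightarrow> nat \<Rightarrow> nat \<Rightarrow> 'm" where
  "dgn_sum n l u = csum C (Mo n) (Mo (Suc n)) (\<lambda>k. csgn C (l + k) (s n (l + k))) (u - l)"

lemma dgn_sum_hom [simp]: "u \<le> n + 2 \<Longrightarrow> dgn_sum n l u \<in> Hom C (Mo n) (Mo (Suc n))"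
  unfolding dgn_sum_def by (rule csum_hom) (auto intro: csgn_hom)

lemma dgn_sum_0: "dgn_sum n 0 u = csum C (Mo n) (Mo (Suc n)) (\<lambda>k. csgn C k (s n k)) u"
  by (simp add: dgn_sum_def)

lemma dop_eq_dgn_sum: "d n = dgn_sum n 0 (n + 2)"
  by (simp add: dop_eq dgn_sum_def)

lemma dgn_sum_split:
  assumes "l \<le> v" "v \<le> u" "u \<le> n + 2"
  shows "dgn_sum n l u = dgn_sum n l v \<oplus> dgn_sum n v u"
proof -
  let ?f = "\<lambda>k. csgn C (l + k) (s n (l + k))"
  have "dgn_sum n l u = csum C (Mo n) (Mo (Suc n)) ?f ((v - l) + (u - v))"
    unfolding dgn_sum_def using assms by simp
  also have "\<dots> = dgn_sum n l v \<oplus> csum C (Mo n) (Mo (Suc n)) (\<lambda>i. ?f (v - l + i)) (u - v)"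
    unfolding dgn_sum_def using assms by (intro csum_split) (auto intro: csgn_hom)
  also have "csum C (Mo n) (Mo (Suc n)) (\<lambda>i. ?f (v - l + i)) (u - v) = dgn_sum n v u"
    unfolding dgn_sum_def using assms by (intro csum_cong) simp
  finally show ?thesis .
qed

lemma dgn_sum_Suc: "l \<le> Suc n \<Longrightarrow> dgn_sum n l (Suc l) = csgn C l (s n l)"
  unfolding dgn_sum_def by (simp add: csum_one csgn_hom)

lemma face_csgn_dgn_swap:
  assumes "\<partial> (Suc (Suc n)) i \<cdot> s (Suc n) j = s n j' \<cdot> \<partial> (Suc n) i'"
    and "i \<le> Suc (Suc n)" "j \<le> Suc (Suc n)" "i' \<le> Suc n" "j' \<le> Suc n"
  shows "\<partial> (Suc (Suc n)) i \<cdot> csgn C k (s (Suc n) j) = csgn C k (s n j') \<cdot> \<partial> (Suc n) i'"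
  by (rule cmp_csgn_swap[OF dgn_hom face_hom face_hom dgn_hom]) (use assms in auto)

lemma face_dgn_sum_below:
  assumes "u \<le> k" "k \<le> Suc n"
  shows "\<partial> (Suc (Suc n)) (Suc k) \<cdot> dgn_sum (Suc n) l u = dgn_sum n l u \<cdot> \<partial> (Suc n) k"
proof -
  have "\<partial> (Suc (Suc n)) (Suc k) \<cdot> dgn_sum (Suc n) l u =
    csum C (Mo (Suc n)) (Mo (Suc n))
    (\<lambda>j. \<partial> (Suc (Suc n)) (Suc k) \<cdot> csgn C (l + j) (s (Suc n) (l + j))) (u - l)"
    unfolding dgn_sum_def using assms by (intro cmp_csum) (auto intro: csgn_hom)
  also have "\<dots> =
      csum C (Mo (Suc n)) (Mo (Suc n)) (\<lambda>j. csgn C (l + j) (s n (l + j)) \<cdot> \<partial> (Suc n) k) (u - l)"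
  proof (rule csum_cong)
    fix j assume "j < u - l"
    then have "Suc (l + j) < Suc k" using assms by simp
    then show "\<partial> (Suc (Suc n)) (Suc k) \<cdot> csgn C (l + j) (s (Suc n) (l + j)) =
      csgn C (l + j) (s n (l + j)) \<cdot> \<partial> (Suc n) k"
      using assms face_dgn_greater[of "l + j" "Suc k" n] by (intro face_csgn_dgn_swap) auto
  qed
  also have "\<dots> = dgn_sum n l u \<cdot> \<partial> (Suc n) k"
    unfolding dgn_sum_def using assms by (intro csum_cmp[symmetric]) (auto intro: csgn_hom)
  finally show ?thesis .
qed

(* The excluded case \<partial>_0 s_{n+1,n+2} is \<tau> (n + 1), not a composite s \<partial>. *)
lemma face_dgn_sum_above:
  assumes "k \<le> l" "l < u" "u \<le> n + 2" "0 < k \<or> u \<le> Suc n"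
  shows "\<partial> (Suc (Suc n)) k \<cdot> dgn_sum (Suc n) (Suc l) (Suc u) = \<ominus> (dgn_sum n l u \<cdot> \<partial> (Suc n) k)"
proof -
  have "\<partial> (Suc (Suc n)) k \<cdot> dgn_sum (Suc n) (Suc l) (Suc u) =
    csum C (Mo (Suc n)) (Mo (Suc n))
    (\<lambda>j. \<partial> (Suc (Suc n)) k \<cdot> csgn C (Suc l + j) (s (Suc n) (Suc l + j))) (u - l)"
    unfolding dgn_sum_def diff_Suc_Suc using assms by (intro cmp_csum) (auto intro: csgn_hom)
  also have "\<dots> =
      csum C (Mo (Suc n)) (Mo (Suc n)) (\<lambda>j. \<ominus> (csgn C (l + j) (s n (l + j)) \<cdot> \<partial> (Suc n) k)) (u - l)"
  proof (rule csum_cong)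
    fix j assume "j < u - l"
    then have *: "k < Suc l + j" "Suc l + j \<le> n + 2" "\<not> (k = 0 \<and> Suc l + j = n + 2)" using assms
      by auto
    then show "\<partial> (Suc (Suc n)) k \<cdot> csgn C (Suc l + j) (s (Suc n) (Suc l + j)) =
      \<ominus> (csgn C (l + j) (s n (l + j)) \<cdot> \<partial> (Suc n) k)"
    proof -
      have "\<partial> (Suc (Suc n)) k \<cdot> csgn C (l + j) (s (Suc n) (Suc l + j))
        = csgn C (l + j) (s n (l + j)) \<cdot> \<partial> (Suc n) k"
        using \<open>j < u - l\<close> assms face_dgn_less[OF *] by (intro face_csgn_dgn_swap) auto
      then show ?thesis
        using \<open>j < u - l\<close> assms
        by (simp add: csgn_Suc[of _ "Mo (Suc n)" "Mo (Suc (Suc n))"] csgn_hom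
          cmp_neg[of _ "Mo (Suc n)" "Mo (Suc (Suc n))" _ "Mo (Suc n)"]
          neg_cmp[of _ "Mo (Suc n)" "Mo n" _ "Mo (Suc n)"])
    qed
  qed
  also have "\<dots> = \<ominus> (dgn_sum n l u \<cdot> \<partial> (Suc n) k)"
    unfolding dgn_sum_def using assms
    by (simp add: csum_neg csum_cmp[where X="Mo n" and W="Mo (Suc n)"] csgn_hom
      cmp_hom[where Y="Mo n"])
  finally show ?thesis .
qed

lemma face_dgn_sum_pair:
  assumes "k \<le> n"
  shows "\<partial> (Suc n) (Suc k) \<cdot> dgn_sum n k (Suc (Suc k)) = \<zero> n n"
proof -
  have "dgn_sum n k (Suc (Suc k)) = csgn C k (s n k) \<oplus> csgn C (Suc k) (s n (Suc k))"
    using assms dgn_sum_split[of k "Suc k" "Suc (Suc k)" n] by (simp add: dgn_sum_Suc)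
  then have "\<partial> (Suc n) (Suc k) \<cdot> dgn_sum n k (Suc (Suc k)) = csgn C k (\<one> n) \<oplus> csgn C (Suc k) (\<one> n)"
    using assms face_dgn_id[of k "Suc k" n] face_dgn_id[of "Suc k" "Suc k" n]
      cmp_add[where X="Mo n" and Y="Mo (Suc n)" and Z="Mo n"] csgn_hom
    by (simp add: cmp_csgn[of _ "Mo n" "Mo (Suc n)" _ "Mo n"])
  then show ?thesis using csgn_add_csgn_Suc[OF one_hom] by simp
qed

lemma face_0_dop:
  "\<partial> (Suc (Suc m)) 0 \<cdot> d (Suc m) = \<one> (Suc m) \<oplus> \<ominus> \<kappa> (Suc m) \<oplus> \<ominus> (d m \<cdot> \<partial> (Suc m) 0)"
proof -
  let ?A = "dgn_sum m 0 (Suc m) \<cdot> \<partial> (Suc m) 0"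
    and ?T = "csgn C (Suc m) (\<tau> (Suc m))"
    and ?E = "csgn C (Suc m) (s m (Suc m) \<cdot> \<partial> (Suc m) 0)"
  have homs: "?A \<in> Hom C (Mo (Suc m)) (Mo (Suc m))" "?T \<in> Hom C (Mo (Suc m)) (Mo (Suc m))"
    "?E \<in> Hom C (Mo (Suc m)) (Mo (Suc m))"
    by (auto intro: cmp_hom[where Y="Mo m"] csgn_hom[OF tau_hom] csgn_hom[OF dgn_face_hom])
  have d_Suc:
    "d (Suc m) = s (Suc m) 0
    \<oplus> (dgn_sum (Suc m) 1 (Suc (Suc m)) \<oplus> csgn C (Suc (Suc m)) (s (Suc m) (Suc (Suc m))))"
    using dgn_sum_split[of 0 1 "Suc m + 2" "Suc m"]
      dgn_sum_split[of 1 "Suc (Suc m)" "Suc m + 2" "Suc m"]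
    by (simp add: dop_eq_dgn_sum dgn_sum_Suc)
  have "\<partial> (Suc (Suc m)) 0 \<cdot> csgn C (Suc (Suc m)) (s (Suc m) (Suc (Suc m))) = \<ominus> ?T"
    using cmp_csgn[of "s (Suc m) (Suc (Suc m))" "Mo (Suc m)" "Mo (Suc (Suc m))"
      "\<partial> (Suc (Suc m)) 0" "Mo (Suc m)"]
    by (simp add: csgn_Suc[OF tau_hom, of "Suc m"])
  then have "\<partial> (Suc (Suc m)) 0 \<cdot> d (Suc m) = \<one> (Suc m) \<oplus> (\<ominus> ?A \<oplus> \<ominus> ?T)"
    unfolding d_Suc using face_dgn_id[of 0 0 "Suc m"] face_dgn_sum_above[of 0 0 "Suc m" m]
    by (simp add: cmp_add[where X="Mo (Suc m)" and Y="Mo (Suc (Suc m))" and Z="Mo (Suc m)"]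
      add_hom csgn_hom)
  also have "\<dots> = \<one> (Suc m) \<oplus> \<ominus> (?T \<oplus> \<ominus> ?E) \<oplus> \<ominus> (?A \<oplus> ?E)"
    using homs by (intro diff_diff_add_cancel) auto
  also have "?T \<oplus> \<ominus> ?E = \<kappa> (Suc m)"
    unfolding kappa_Suc
    by (simp add: csgn_add[OF tau_hom neg_hom[OF dgn_face_hom]] csgn_neg[OF dgn_face_hom])
  also have "?A \<oplus> ?E = d m \<cdot> \<partial> (Suc m) 0"
    using dgn_sum_split[of 0 "Suc m" "Suc (Suc m)" m]
    by (simp add: dop_eq_dgn_sum dgn_sum_Suc
      add_cmp[where X="Mo (Suc m)" and Y="Mo m" and Z="Mo (Suc m)"]
      csgn_hom csgn_cmp[of "\<partial> (Suc m) 0" "Mo (Suc m)" "Mo m" _ "Mo (Suc m)"])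
  finally show ?thesis .
qed

lemma face_Suc_dop:
  assumes "k \<le> m"
  shows "\<partial> (Suc (Suc m)) (Suc k) \<cdot> d (Suc m) =
    dgn_sum m 0 k \<cdot> \<partial> (Suc m) k \<oplus> \<ominus> (dgn_sum m (Suc k) (Suc (Suc m)) \<cdot> \<partial> (Suc m) (Suc k))"
proof -
  have "d (Suc m) = dgn_sum (Suc m) 0 k
    \<oplus> (dgn_sum (Suc m) k (Suc (Suc k)) \<oplus> dgn_sum (Suc m) (Suc (Suc k)) (Suc m + 2))"
    using assms dgn_sum_split[of 0 k "Suc m + 2" "Suc m"]
      dgn_sum_split[of k "Suc (Suc k)" "Suc m + 2" "Suc m"]
    by (simp add: dop_eq_dgn_sum)
  then show ?thesis
    using assms face_dgn_sum_below[of k k m 0] face_dgn_sum_pair[of k "Suc m"]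
      face_dgn_sum_above[of "Suc k" "Suc k" "Suc (Suc m)" m]
    by (simp add: cmp_add[where X="Mo (Suc m)" and Y="Mo (Suc (Suc m))" and Z="Mo (Suc m)"]
      add_hom add_zero_left neg_hom cmp_hom[where Y="Mo m"])
qed

lemma face_top_dop:
  "\<partial> (Suc (Suc m)) (Suc (Suc m)) \<cdot> d (Suc m) = dgn_sum m 0 (Suc m) \<cdot> \<partial> (Suc m) (Suc m)"
proof -
  have "d (Suc m) = dgn_sum (Suc m) 0 (Suc m) \<oplus> dgn_sum (Suc m) (Suc m) (Suc m + 2)"
    using dgn_sum_split[of 0 "Suc m" "Suc m + 2" "Suc m"] by (simp add: dop_eq_dgn_sum)
  then show ?thesis
    using face_dgn_sum_below[of "Suc m" "Suc m" m 0] face_dgn_sum_pair[of "Suc m" "Suc m"]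
    by (simp add: cmp_add[where X="Mo (Suc m)" and Y="Mo (Suc (Suc m))" and Z="Mo (Suc m)"]
      add_zero_right cmp_hom[where Y="Mo m"])
qed

definition dgn_face_below :: "nat \<Rightarrow> nat \<Rightarrow> 'm" where
  "dgn_face_below m l = csgn C l (dgn_sum m 0 l \<cdot> \<partial> (Suc m) l)"

definition dgn_face_above :: "nat \<Rightarrow> nat \<Rightarrow> 'm" where
  "dgn_face_above m l = csgn C l (dgn_sum m l (Suc (Suc m)) \<cdot> \<partial> (Suc m) l)"

lemma dgn_face_below_hom [simp]: "l \<le> Suc m \<Longrightarrow> dgn_face_below m l \<in> Hom C (Mo (Suc m)) (Mo (Suc m))"
  unfolding dgn_face_below_def by (auto intro!: csgn_hom cmp_hom[where Y="Mo m"])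

lemma dgn_face_above_hom [simp]: "l \<le> Suc m \<Longrightarrow> dgn_face_above m l \<in> Hom C (Mo (Suc m)) (Mo (Suc m))"
  unfolding dgn_face_above_def by (auto intro!: csgn_hom cmp_hom[where Y="Mo m"])

lemma dop_bop_eq:
  "d m \<cdot> b (Suc m) = csum C (Mo (Suc m)) (Mo (Suc m)) (dgn_face_below m) (Suc (Suc m)) \<oplus>
    csum C (Mo (Suc m)) (Mo (Suc m)) (dgn_face_above m) (Suc (Suc m))"
proof -
  have "d m \<cdot> b (Suc m)
    = csum C (Mo (Suc m)) (Mo (Suc m)) (\<lambda>l. d m \<cdot> csgn C l (\<partial> (Suc m) l)) (Suc (Suc m))"
    unfolding bop_eq by (rule cmp_csum) (auto intro: csgn_hom)
  also have "\<dots> =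
      csum C (Mo (Suc m)) (Mo (Suc m)) (\<lambda>l. dgn_face_below m l \<oplus> dgn_face_above m l) (Suc (Suc m))"
  proof (rule csum_cong)
    fix l assume "l < Suc (Suc m)"
    then have "d m = dgn_sum m 0 l \<oplus> dgn_sum m l (Suc (Suc m))"
      using dgn_sum_split[of 0 l "Suc (Suc m)" m] by (simp add: dop_eq_dgn_sum)
    with \<open>l < Suc (Suc m)\<close> show
      "d m \<cdot> csgn C l (\<partial> (Suc m) l) = dgn_face_below m l \<oplus> dgn_face_above m l"
      unfolding dgn_face_below_def dgn_face_above_def
      by (simp add: add_cmp[OF csgn_hom[OF face_hom] dgn_sum_hom dgn_sum_hom]
        cmp_csgn[OF face_hom dgn_sum_hom]
        csgn_add[OF cmp_hom[OF face_hom dgn_sum_hom] cmp_hom[OF face_hom dgn_sum_hom]])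
  qed
  also have "\<dots> = csum C (Mo (Suc m)) (Mo (Suc m)) (dgn_face_below m) (Suc (Suc m)) \<oplus>
    csum C (Mo (Suc m)) (Mo (Suc m)) (dgn_face_above m) (Suc (Suc m))"
    by (rule csum_add) auto
  finally show ?thesis .
qed

lemma csgn_face_dop:
  assumes "i \<le> Suc (Suc m)"
  shows "csgn C i (\<partial> (Suc (Suc m)) i \<cdot> d (Suc m)) =
    (if i = 0 then \<one> (Suc m) \<oplus> \<ominus> \<kappa> (Suc m) else \<zero> (Suc m) (Suc m)) \<oplus>
    \<ominus> ((if i = 0 then \<zero> (Suc m) (Suc m) else dgn_face_below m (i - 1)) \<oplus>
       (if i \<le> Suc m then dgn_face_above m i else \<zero> (Suc m) (Suc m)))"
proof -
  consider "i = 0" | k where "i = Suc k" "k \<le> m" | "i = Suc (Suc m)"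
    using assms by (cases i) (auto simp: le_Suc_eq)
  then show ?thesis
  proof cases
    case 1
    have "dgn_face_above m 0 = d m \<cdot> \<partial> (Suc m) 0"
      by (simp add: dgn_face_above_def dop_eq_dgn_sum)
    then show ?thesis
      using 1 face_0_dop[of m] by (simp add: add_zero_left[OF cmp_hom[OF face_hom dop_hom]])
  next
    case 2
    have "csgn C i (\<partial> (Suc (Suc m)) i \<cdot> d (Suc m)) = \<ominus> dgn_face_below m k \<oplus> \<ominus> dgn_face_above m i"
      using 2 face_Suc_dop[of k m]
      by (simp add: dgn_face_below_def dgn_face_above_def
        csgn_Suc[OF cmp_hom[OF face_hom dgn_sum_hom]]
        csgn_add[OF cmp_hom[OF face_hom dgn_sum_hom] neg_hom[OF cmp_hom[OF face_hom dgn_sum_hom]]]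
        csgn_neg[OF cmp_hom[OF face_hom dgn_sum_hom]])
    then show ?thesis
      using 2 by (simp add: neg_add[OF dgn_face_below_hom dgn_face_above_hom]
          add_zero_left[OF add_hom[OF neg_hom[OF dgn_face_below_hom] neg_hom[OF dgn_face_above_hom]]])
  next
    case 3
    have "csgn C i (\<partial> (Suc (Suc m)) i \<cdot> d (Suc m)) = \<ominus> dgn_face_below m (Suc m)"
      using 3 face_top_dop[of m]
      by (simp add: dgn_face_below_def csgn_Suc[OF cmp_hom[OF face_hom dgn_sum_hom]])
    then show ?thesis
      using 3 by (simp add: add_zero_right[OF dgn_face_below_hom]
          add_zero_left[OF neg_hom[OF dgn_face_below_hom]])
  qed
qed

lemma bop_dop_eq:
  "b (Suc (Suc m)) \<cdot> d (Suc m) = \<one> (Suc m) \<oplus> \<ominus> \<kappa> (Suc m) \<oplus>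
    \<ominus> (csum C (Mo (Suc m)) (Mo (Suc m)) (dgn_face_below m) (Suc (Suc m)) \<oplus>
       csum C (Mo (Suc m)) (Mo (Suc m)) (dgn_face_above m) (Suc (Suc m)))"
proof -
  let ?X = "Mo (Suc m)" and ?N = "Suc (Suc (Suc m))"
  define e where "e i = (if i = 0 then \<one> (Suc m) \<oplus> \<ominus> \<kappa> (Suc m) else \<zero> (Suc m) (Suc m))" for i :: nat
  define p where "p i = (if i = 0 then \<zero> (Suc m) (Suc m) else dgn_face_below m (i - 1))" for i
  define q where "q i = (if i \<le> Suc m then dgn_face_above m i else \<zero> (Suc m) (Suc m))" for i :: nat
  have e_hom: "e i \<in> Hom C ?X ?X" for i
    unfolding e_def by (auto intro: add_hom[OF one_hom neg_hom[OF kappa_hom]] zero_hom)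
  have p_hom: "p i \<in> Hom C ?X ?X" if "i < ?N" for i
    unfolding p_def using that by (auto intro: zero_hom)
  have q_hom: "q i \<in> Hom C ?X ?X" for i
    unfolding q_def by (auto intro: zero_hom)
  have "b (Suc (Suc m)) \<cdot> d (Suc m)
    = csum C ?X ?X (\<lambda>i. csgn C i (\<partial> (Suc (Suc m)) i) \<cdot> d (Suc m)) ?N"
    unfolding bop_eq by (rule csum_cmp) (auto intro: csgn_hom)
  also have "\<dots> = csum C ?X ?X (\<lambda>i. e i \<oplus> \<ominus> (p i \<oplus> q i)) ?N"
    unfolding e_def p_def q_def
    by (intro csum_cong) (simp add: csgn_cmp[OF dop_hom face_hom] csgn_face_dop)
  also have "\<dots> = csum C ?X ?X e ?N \<oplus> \<ominus> (csum C ?X ?X p ?N \<oplus> csum C ?X ?X q ?N)"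
    using e_hom p_hom q_hom by (simp add: csum_add csum_neg add_hom neg_hom)
  also have "csum C ?X ?X e ?N = \<one> (Suc m) \<oplus> \<ominus> \<kappa> (Suc m)"
    using e_hom csum_Suc_shift[of ?X ?X "Suc (Suc m)" e]
    by (simp add: csum_zero e_def add_zero_right[OF add_hom[OF one_hom neg_hom[OF kappa_hom]]])
  also have "csum C ?X ?X p ?N = csum C ?X ?X (dgn_face_below m) (Suc (Suc m))"
    using p_hom csum_Suc_shift[of ?X ?X "Suc (Suc m)" p]
    by (simp add: p_def add_zero_left csum_hom)
  also have "csum C ?X ?X q ?N = csum C ?X ?X (dgn_face_above m) (Suc (Suc m))"
    using q_hom csum_Suc[of ?X ?X "Suc (Suc m)" q] csum_cong[of "Suc (Suc m)" q "dgn_face_above m"]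
    by (simp add: q_def add_zero_right csum_hom)
  finally show ?thesis .
qed

lemma bop_dop_add_dop_bop:
  "b (Suc (Suc m)) \<cdot> d (Suc m) \<oplus> d m \<cdot> b (Suc m) = \<one> (Suc m) \<oplus> \<ominus> \<kappa> (Suc m)"
  unfolding bop_dop_eq dop_bop_eq
  by (rule diff_add_cancel) (auto intro!: add_hom csum_hom neg_hom)

(* There is no b_0 (M_{-1} = 0), hence the case distinction. *)
definition laplacian :: "nat \<Rightarrow> 'm" where
  "laplacian n = (if n = 0 then b (Suc 0) \<cdot> d 0 else b (Suc n) \<cdot> d n \<oplus> d (n - 1) \<cdot> b n)"

lemma laplacian_Suc: "laplacian (Suc n) = b (Suc (Suc n)) \<cdot> d (Suc n) \<oplus> d n \<cdot> b (Suc n)"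
  by (simp add: laplacian_def)

lemma laplacian_hom [simp]: "laplacian n \<in> Hom C (Mo n) (Mo n)"
  by (cases n) (auto simp: laplacian_def
      intro!: add_hom cmp_hom[OF dop_hom bop_hom] cmp_hom[OF bop_hom dop_hom])

lemma kappa_eq_laplacian: "\<kappa> n = \<one> n \<oplus> \<ominus> laplacian n"
proof -
  have "laplacian n = \<one> n \<oplus> \<ominus> \<kappa> n"
    by (cases n) (simp_all add: laplacian_def bop_dop_0 bop_dop_add_dop_bop)
  then show ?thesis using eq_diff_diff[OF one_hom kappa_hom] by simp
qed

lemma laplacian_bop: "laplacian n \<cdot> b (Suc n) = b (Suc n) \<cdot> laplacian (Suc n)"
proof -
  have "b (Suc n) \<cdot> laplacian (Suc n) = b (Suc n) \<cdot> (b (Suc (Suc n)) \<cdot> d (Suc n))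
    \<oplus> b (Suc n) \<cdot> (d n \<cdot> b (Suc n))"
    unfolding laplacian_Suc
    by (rule cmp_add[OF cmp_hom[OF dop_hom bop_hom] cmp_hom[OF bop_hom dop_hom] bop_hom])
  also have "\<dots> = b (Suc n) \<cdot> d n \<cdot> b (Suc n)"
    by (simp add: cmp_assoc[OF dop_hom bop_hom bop_hom] cmp_assoc[OF bop_hom dop_hom bop_hom]
      bop_bop zero_cmp[OF dop_hom Mo_obj]
      add_zero_left[OF cmp_hom[OF bop_hom cmp_hom[OF dop_hom bop_hom]]])
  also have "\<dots> = laplacian n \<cdot> b (Suc n)"
  proof (cases n)
    case (Suc p)
    have "d p \<cdot> b n \<cdot> b (Suc n) = \<zero> (Suc n) n"
      using Suc cmp_assoc[OF bop_hom bop_hom dop_hom, of p] bop_bop[of p]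
        cmp_zero[OF dop_hom Mo_obj] by simp
    then show ?thesis
      using Suc add_cmp[OF bop_hom cmp_hom[OF dop_hom bop_hom] cmp_hom[OF bop_hom dop_hom], of p]
      by (simp add: laplacian_def
        add_zero_right[OF cmp_hom[OF bop_hom cmp_hom[OF dop_hom bop_hom]]])
  qed (simp add: laplacian_def)
  finally show ?thesis ..
qed

lemma laplacian_dop: "laplacian (Suc n) \<cdot> d n = d n \<cdot> laplacian n"
proof -
  have "laplacian (Suc n) \<cdot> d n = b (Suc (Suc n)) \<cdot> d (Suc n) \<cdot> d n \<oplus> d n \<cdot> b (Suc n) \<cdot> d n"
    unfolding laplacian_Suc
    by (rule add_cmp[OF dop_hom cmp_hom[OF dop_hom bop_hom] cmp_hom[OF bop_hom dop_hom]])
  also have "\<dots> = d n \<cdot> (b (Suc n) \<cdot> d n)"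
    by (simp add: cmp_assoc[OF dop_hom dop_hom bop_hom, symmetric]
      cmp_assoc[OF dop_hom bop_hom dop_hom] dop_dop cmp_zero[OF bop_hom Mo_obj]
      add_zero_left[OF cmp_hom[OF dop_hom cmp_hom[OF bop_hom dop_hom]]])
  also have "\<dots> = d n \<cdot> laplacian n"
  proof (cases n)
    case (Suc p)
    have "d n \<cdot> (d p \<cdot> b n) = \<zero> n (Suc n)"
      using Suc cmp_assoc[OF bop_hom dop_hom dop_hom, of p] dop_dop[of p]
        zero_cmp[OF bop_hom Mo_obj] by simp
    then show ?thesis
      using Suc cmp_add[OF cmp_hom[OF dop_hom bop_hom] cmp_hom[OF bop_hom dop_hom] dop_hom, of p]
      by (simp add: laplacian_def
        add_zero_right[OF cmp_hom[OF cmp_hom[OF dop_hom bop_hom] dop_hom]])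
  qed (simp add: laplacian_def)
  finally show ?thesis .
qed

lemma kappa_bop: "\<kappa> n \<cdot> b (Suc n) = b (Suc n) \<cdot> \<kappa> (Suc n)"
  unfolding kappa_eq_laplacian
  by (rule id_diff_cmp_commute[OF bop_hom laplacian_hom laplacian_hom laplacian_bop])

lemma kappa_dop: "\<kappa> (Suc n) \<cdot> d n = d n \<cdot> \<kappa> n"
  unfolding kappa_eq_laplacian
  by (rule id_diff_cmp_commute[OF dop_hom laplacian_hom laplacian_hom laplacian_dop])

lemma kpow_bop: "\<kappa>pow n k \<cdot> b (Suc n) = b (Suc n) \<cdot> \<kappa>pow (Suc n) k"
proof (induction k)
  case 0 then show ?case by (simp add: id_cmp[OF bop_hom] cmp_id[OF bop_hom])
next
  case (Suc k)
  have "\<kappa>pow n (Suc k) \<cdot> b (Suc n) = \<kappa> n \<cdot> (\<kappa>pow n k \<cdot> b (Suc n))"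
    unfolding kpow_Suc by (rule cmp_assoc[OF bop_hom kpow_hom kappa_hom, symmetric])
  also have "\<dots> = \<kappa> n \<cdot> b (Suc n) \<cdot> \<kappa>pow (Suc n) k"
    using Suc cmp_assoc[OF kpow_hom bop_hom kappa_hom] by simp
  also have "\<dots> = b (Suc n) \<cdot> \<kappa>pow (Suc n) (Suc k)"
    unfolding kpow_Suc kappa_bop by (rule cmp_assoc[OF kpow_hom kappa_hom bop_hom, symmetric])
  finally show ?case .
qed

lemma kpow_dop: "\<kappa>pow (Suc n) k \<cdot> d n = d n \<cdot> \<kappa>pow n k"
proof (induction k)
  case 0 then show ?case by (simp add: id_cmp[OF dop_hom] cmp_id[OF dop_hom])
next
  case (Suc k)
  have "\<kappa>pow (Suc n) (Suc k) \<cdot> d n = \<kappa> (Suc n) \<cdot> (\<kappa>pow (Suc n) k \<cdot> d n)"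
    unfolding kpow_Suc by (rule cmp_assoc[OF dop_hom kpow_hom kappa_hom, symmetric])
  also have "\<dots> = \<kappa> (Suc n) \<cdot> d n \<cdot> \<kappa>pow n k"
    using Suc cmp_assoc[OF kpow_hom dop_hom kappa_hom] by simp
  also have "\<dots> = d n \<cdot> \<kappa>pow n (Suc k)"
    unfolding kpow_Suc kappa_dop by (rule cmp_assoc[OF kpow_hom kappa_hom dop_hom, symmetric])
  finally show ?case .
qed

subsection \<open>The Dwyer--Kan operator\<close>

lemma face_tau:
  assumes "i \<le> n"
  shows "\<partial> (Suc n) i \<cdot> \<tau> (Suc n) = \<tau> n \<cdot> \<partial> (Suc n) (Suc i)"
proof -
  have "\<partial> (Suc n) i \<cdot> \<tau> (Suc n) = \<partial> (Suc n) i \<cdot> \<partial> (Suc (Suc n)) 0 \<cdot> s (Suc n) (Suc (Suc n))"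
    using assms by (simp add: cmp_assoc[OF dgn_hom face_hom face_hom])
  also have "\<dots> = \<partial> (Suc n) 0 \<cdot> (\<partial> (Suc (Suc n)) (Suc i) \<cdot> s (Suc n) (Suc (Suc n)))"
    using assms face_face[of 0 "Suc i" n] by (simp add: cmp_assoc[OF dgn_hom face_hom face_hom])
  also have "\<dots> = \<tau> n \<cdot> \<partial> (Suc n) (Suc i)"
    using assms face_dgn_less[of "Suc i" "Suc (Suc n)" n]
    by (simp add: cmp_assoc[OF face_hom dgn_hom face_hom])
  finally show ?thesis .
qed

lemma face_dgn_face:
  assumes "1 \<le> i" "i \<le> Suc p"
  shows "\<partial> (Suc (Suc p)) i \<cdot> (s (Suc p) (Suc (Suc p)) \<cdot> \<partial> (Suc (Suc p)) 0) =
    s p (Suc p) \<cdot> \<partial> (Suc p) 0 \<cdot> \<partial> (Suc (Suc p)) (Suc i)"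
proof -
  have "\<partial> (Suc (Suc p)) i \<cdot> (s (Suc p) (Suc (Suc p)) \<cdot> \<partial> (Suc (Suc p)) 0) =
    s p (Suc p) \<cdot> (\<partial> (Suc p) i \<cdot> \<partial> (Suc (Suc p)) 0)"
    using assms face_dgn_less[of i "Suc (Suc p)" p]
    by (simp add: cmp_assoc[OF face_hom dgn_hom face_hom] cmp_assoc[OF face_hom face_hom dgn_hom])
  also have "\<partial> (Suc p) i \<cdot> \<partial> (Suc (Suc p)) 0 = \<partial> (Suc p) 0 \<cdot> \<partial> (Suc (Suc p)) (Suc i)"
    using assms face_face[of 0 "Suc i" p] by simp
  also have "s p (Suc p) \<cdot> \<dots> = s p (Suc p) \<cdot> \<partial> (Suc p) 0 \<cdot> \<partial> (Suc (Suc p)) (Suc i)"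
    using assms by (simp add: cmp_assoc[OF face_hom face_hom dgn_hom])
  finally show ?thesis .
qed

lemma face_kappa:
  assumes "1 \<le> i" "i \<le> n"
  shows "\<partial> (Suc n) i \<cdot> \<kappa> (Suc n) = \<ominus> (\<kappa> n \<cdot> \<partial> (Suc n) (Suc i))"
proof -
  obtain p where n: "n = Suc p" using assms by (cases n) auto
  have "\<partial> (Suc n) i \<cdot> \<kappa> (Suc n) =
    csgn C (Suc n) (\<tau> n \<oplus> \<ominus> (s p n \<cdot> \<partial> n 0)) \<cdot> \<partial> (Suc n) (Suc i)"
    unfolding kappa_Suc using assms n face_tau[of i n] face_dgn_face[of i p]
    by (intro cmp_csgn_diff_swap[OF face_hom face_hom tau_hom dgn_face_hom tau_hom]) auto
  also have "csgn C (Suc n) (\<tau> n \<oplus> \<ominus> (s p n \<cdot> \<partial> n 0)) = \<ominus> \<kappa> n"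
    using n kappa_Suc[of p] csgn_Suc[OF add_hom[OF tau_hom neg_hom[OF dgn_face_hom]]] by simp
  finally show ?thesis
    using assms by (simp add: neg_cmp[OF face_hom kappa_hom])
qed

lemma face_0_kappa: "\<partial> (Suc n) 0 \<cdot> \<kappa> (Suc n) = \<kappa> n \<cdot> (\<partial> (Suc n) 0 \<oplus> \<ominus> \<partial> (Suc n) (Suc 0))"
proof -
  let ?T = "csgn C n (\<tau> n \<cdot> (\<partial> (Suc n) 0 \<oplus> \<ominus> \<partial> (Suc n) (Suc 0)))"
  have tau_faces: "\<tau> n \<cdot> \<partial> (Suc n) 0 \<in> Hom C (Mo (Suc n)) (Mo n)"
    "\<tau> n \<cdot> \<partial> (Suc n) (Suc 0) \<in> Hom C (Mo (Suc n)) (Mo n)"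
    by (auto intro: cmp_hom[OF face_hom tau_hom])
  have "\<partial> (Suc n) 0 \<cdot> \<kappa> (Suc n) = csgn C (Suc n) (\<tau> n \<cdot> \<partial> (Suc n) (Suc 0) \<oplus> \<ominus> (\<tau> n \<cdot> \<partial> (Suc n) 0))"
    unfolding kappa_Suc using face_tau[of 0 n]
    by (simp add: cmp_csgn[OF add_hom[OF tau_hom neg_hom[OF dgn_face_hom]] face_hom]
      cmp_diff[OF tau_hom dgn_face_hom face_hom] cmp_assoc[OF face_hom dgn_hom face_hom])
  also have "\<dots> = ?T"
    using tau_faces by (simp add: csgn_Suc[OF add_hom[OF tau_faces(2) neg_hom[OF tau_faces(1)]]]
        csgn_neg[OF add_hom[OF tau_faces(2) neg_hom[OF tau_faces(1)]], symmetric] neg_diff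
        cmp_diff[OF face_hom face_hom tau_hom])
  also have "?T = \<kappa> n \<cdot> (\<partial> (Suc n) 0 \<oplus> \<ominus> \<partial> (Suc n) (Suc 0))"
  proof (cases n)
    case (Suc p)
    have "s p n \<cdot> \<partial> n 0 \<cdot> \<partial> (Suc n) (Suc 0) = s p n \<cdot> \<partial> n 0 \<cdot> \<partial> (Suc n) 0"
      using Suc face_face[of 0 1 p]
      by (simp add: cmp_assoc[OF face_hom face_hom dgn_hom, symmetric])
    then have "(s p n \<cdot> \<partial> n 0) \<cdot> (\<partial> (Suc n) 0 \<oplus> \<ominus> \<partial> (Suc n) (Suc 0)) = \<zero> (Suc n) n"
      using Suc
      by (simp add: cmp_diff[OF face_hom face_hom dgn_face_hom] add_neg_right
        cmp_hom[OF face_hom dgn_face_hom])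
    then show ?thesis
      using Suc
      by (simp add: kappa_Suc
        csgn_cmp[OF add_hom[OF face_hom neg_hom[OF face_hom]]
        add_hom[OF tau_hom neg_hom[OF dgn_face_hom]]]
        diff_cmp[OF add_hom[OF face_hom neg_hom[OF face_hom]] tau_hom dgn_face_hom] neg_zero
        add_zero_right[OF cmp_hom[OF add_hom[OF face_hom neg_hom[OF face_hom]] tau_hom]])
  qed (simp add: kappa_0)
  finally show ?thesis .
qed

definition face_sum :: "nat \<Rightarrow> nat \<Rightarrow> 'm" where
  "face_sum n k = csum C (Mo (Suc n)) (Mo n) (\<lambda>i. csgn C i (\<partial> (Suc n) i)) k"

lemma face_sum_hom [simp]: "k \<le> Suc (Suc n) \<Longrightarrow> face_sum n k \<in> Hom C (Mo (Suc n)) (Mo n)"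
  unfolding face_sum_def by (rule csum_hom) (auto intro: csgn_hom)

lemma face_sum_Suc: "k \<le> Suc n \<Longrightarrow> face_sum n (Suc k) = face_sum n k \<oplus> csgn C k (\<partial> (Suc n) k)"
  unfolding face_sum_def by (rule csum_Suc) (auto intro: csgn_hom)

lemma face_sum_kappa:
  "k \<le> n \<Longrightarrow> face_sum n (Suc k) \<cdot> \<kappa> (Suc n) = \<kappa> n \<cdot> face_sum n (Suc (Suc k))"
proof (induction k)
  case 0
  have "face_sum n (Suc 0) = \<partial> (Suc n) 0"
    "face_sum n (Suc (Suc 0)) = \<partial> (Suc n) 0 \<oplus> \<ominus> \<partial> (Suc n) (Suc 0)"
    unfolding face_sum_def using csum_two[of "\<lambda>i. csgn C i (\<partial> (Suc n) i)" "Mo (Suc n)" "Mo n"]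
    by (simp_all add: csum_one csgn_def neg_hom numeral_2_eq_2)
  then show ?case by (simp add: face_0_kappa)
next
  case (Suc k)
  have "csgn C (Suc k) (\<partial> (Suc n) (Suc k)) \<cdot> \<kappa> (Suc n)
    = \<kappa> n \<cdot> csgn C (Suc (Suc k)) (\<partial> (Suc n) (Suc (Suc k)))"
    using Suc.prems face_kappa[of "Suc k" n]
    by (simp add: csgn_cmp[OF kappa_hom face_hom] cmp_csgn[OF face_hom kappa_hom]
      csgn_neg[OF cmp_hom[OF face_hom kappa_hom]] csgn_Suc[OF cmp_hom[OF face_hom kappa_hom]])
  moreover have "face_sum n (Suc (Suc k)) \<cdot> \<kappa> (Suc n) =
    face_sum n (Suc k) \<cdot> \<kappa> (Suc n) \<oplus> csgn C (Suc k) (\<partial> (Suc n) (Suc k)) \<cdot> \<kappa> (Suc n)"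
    using Suc.prems face_sum_Suc[of "Suc k" n]
    by (simp add: add_cmp[OF kappa_hom face_sum_hom csgn_hom[OF face_hom]])
  moreover have "\<kappa> n \<cdot> face_sum n (Suc (Suc (Suc k))) =
    \<kappa> n \<cdot> face_sum n (Suc (Suc k)) \<oplus> \<kappa> n \<cdot> csgn C (Suc (Suc k)) (\<partial> (Suc n) (Suc (Suc k)))"
    using Suc.prems face_sum_Suc[of "Suc (Suc k)" n]
    by (simp add: cmp_add[OF face_sum_hom csgn_hom[OF face_hom] kappa_hom])
  ultimately show ?case
    using Suc by simp
qed

lemma face_0_kpow: "k \<le> Suc n \<Longrightarrow> \<partial> (Suc n) 0 \<cdot> \<kappa>pow (Suc n) k = \<kappa>pow n k \<cdot> face_sum n (Suc k)"
proof (induction k)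
  case 0
  then show ?case
    by (simp add: face_sum_def csum_one csgn_hom cmp_id[OF face_hom] id_cmp[OF face_hom])
next
  case (Suc k)
  then have "\<partial> (Suc n) 0 \<cdot> \<kappa>pow (Suc n) (Suc k) = \<kappa>pow n k \<cdot> (face_sum n (Suc k) \<cdot> \<kappa> (Suc n))"
    by (simp add: kpow_Suc_right cmp_assoc[OF kappa_hom kpow_hom face_hom]
      cmp_assoc[OF kappa_hom face_sum_hom kpow_hom])
  also have "\<dots> = \<kappa>pow n (Suc k) \<cdot> face_sum n (Suc (Suc k))"
    using Suc.prems
    by (simp add: face_sum_kappa kpow_Suc_right cmp_assoc[OF face_sum_hom kappa_hom kpow_hom])
  finally show ?case .
qed

lemma kappa_dgn_0: "\<kappa> (Suc n) \<cdot> s n 0 = \<zero> n (Suc n)"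
proof -
  have "\<tau> (Suc n) \<cdot> s n 0 = \<partial> (Suc (Suc n)) 0 \<cdot> (s (Suc n) (Suc (Suc n)) \<cdot> s n 0)"
    by (simp add: cmp_assoc[OF dgn_hom dgn_hom face_hom])
  also have "\<dots> = \<partial> (Suc (Suc n)) 0 \<cdot> s (Suc n) 0 \<cdot> s n (Suc n)"
    using dgn_dgn[of 0 "Suc (Suc n)" n] by (simp add: cmp_assoc[OF dgn_hom dgn_hom face_hom])
  also have "\<dots> = s n (Suc n)"
    using face_dgn_id[of 0 0 "Suc n"] by (simp add: id_cmp[OF dgn_hom])
  also have "\<dots> = s n (Suc n) \<cdot> \<partial> (Suc n) 0 \<cdot> s n 0"
    using face_dgn_id[of 0 0 n]
    by (simp add: cmp_assoc[OF dgn_hom face_hom dgn_hom, symmetric] cmp_id[OF dgn_hom])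
  finally have "(\<tau> (Suc n) \<oplus> \<ominus> (s n (Suc n) \<cdot> \<partial> (Suc n) 0)) \<cdot> s n 0 = \<zero> n (Suc n)"
    by (simp add: diff_cmp[OF dgn_hom tau_hom dgn_face_hom]
      add_neg_right[OF cmp_hom[OF dgn_hom dgn_face_hom]])
  then show ?thesis
    by (simp add: kappa_Suc csgn_cmp[OF dgn_hom add_hom[OF tau_hom neg_hom[OF dgn_face_hom]]]
      csgn_zero)
qed

lemma kappa_dgn:
  assumes "1 \<le> i" "i \<le> n"
  shows "\<kappa> (Suc n) \<cdot> s n i = \<ominus> (s n (i - 1) \<cdot> \<kappa> n)"
proof -
  obtain p where n: "n = Suc p" using assms by (cases n) auto
  obtain j where i: "i = Suc j" using assms by (cases i) auto
  have tau: "\<tau> (Suc n) \<cdot> s n i = s n j \<cdot> \<tau> n"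
  proof -
    have "\<tau> (Suc n) \<cdot> s n i = \<partial> (Suc (Suc n)) 0 \<cdot> (s (Suc n) (Suc (Suc n)) \<cdot> s n i)"
      using assms by (simp add: cmp_assoc[OF dgn_hom dgn_hom face_hom])
    also have "\<dots> = \<partial> (Suc (Suc n)) 0 \<cdot> s (Suc n) i \<cdot> s n (Suc n)"
      using assms dgn_dgn[of i "Suc (Suc n)" n]
      by (simp add: cmp_assoc[OF dgn_hom dgn_hom face_hom])
    also have "\<dots> = s n j \<cdot> \<tau> n"
      using assms i face_dgn_less[of 0 i n]
      by (simp add: cmp_assoc[OF dgn_hom face_hom dgn_hom, symmetric])
    finally show ?thesis .
  qed
  have dgn_face: "s n (Suc n) \<cdot> \<partial> (Suc n) 0 \<cdot> s n i = s n j \<cdot> (s p n \<cdot> \<partial> n 0)"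
  proof -
    have "s n (Suc n) \<cdot> \<partial> (Suc n) 0 \<cdot> s n i = s n (Suc n) \<cdot> (\<partial> (Suc n) 0 \<cdot> s n i)"
      using assms by (simp add: cmp_assoc[OF dgn_hom face_hom dgn_hom])
    also have "\<dots> = s n (Suc n) \<cdot> s p j \<cdot> \<partial> n 0"
      using assms n i face_dgn_less[of 0 i p] by (simp add: cmp_assoc[OF face_hom dgn_hom dgn_hom])
    also have "\<dots> = s n j \<cdot> s p n \<cdot> \<partial> n 0"
      using assms n i dgn_dgn[of j "Suc n" p] by simp
    also have "\<dots> = s n j \<cdot> (s p n \<cdot> \<partial> n 0)"
      using assms n i by (simp add: cmp_assoc[OF face_hom dgn_hom dgn_hom])
    finally show ?thesis .
  qed
  have "\<kappa> (Suc n) \<cdot> s n i = s n j \<cdot> csgn C (Suc n) (\<tau> n \<oplus> \<ominus> (s p n \<cdot> \<partial> n 0))"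
    unfolding kappa_Suc using assms n i tau dgn_face
    by (intro csgn_diff_cmp_swap[OF dgn_hom dgn_hom tau_hom dgn_face_hom tau_hom]) auto
  also have "csgn C (Suc n) (\<tau> n \<oplus> \<ominus> (s p n \<cdot> \<partial> n 0)) = \<ominus> \<kappa> n"
    using n kappa_Suc[of p] csgn_Suc[OF add_hom[OF tau_hom neg_hom[OF dgn_face_hom]]] by simp
  finally show ?thesis
    using assms i by (simp add: cmp_neg[OF kappa_hom dgn_hom])
qed

lemma kpow_dgn: "i < k \<Longrightarrow> i \<le> n \<Longrightarrow> \<kappa>pow (Suc n) k \<cdot> s n i = \<zero> n (Suc n)"
proof (induction k arbitrary: i)
  case 0 then show ?case by simp
next
  case (Suc k)
  have "\<kappa>pow (Suc n) (Suc k) \<cdot> s n i = \<kappa>pow (Suc n) k \<cdot> (\<kappa> (Suc n) \<cdot> s n i)"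
    using Suc.prems by (simp add: kpow_Suc_right cmp_assoc[OF dgn_hom kappa_hom kpow_hom])
  also have "\<dots> = \<zero> n (Suc n)"
  proof (cases i)
    case 0
    then show ?thesis by (simp add: kappa_dgn_0 cmp_zero[OF kpow_hom])
  next
    case (Suc j)
    then have "\<kappa>pow (Suc n) k \<cdot> (\<kappa> (Suc n) \<cdot> s n i) = \<ominus> (\<kappa>pow (Suc n) k \<cdot> s n j \<cdot> \<kappa> n)"
      using Suc.prems kappa_dgn[of i n]
      by (simp add: cmp_neg[OF cmp_hom[OF kappa_hom dgn_hom] kpow_hom]
        cmp_assoc[OF kappa_hom dgn_hom kpow_hom])
    then show ?thesis
      using Suc Suc.prems Suc.IH[of j] by (simp add: zero_cmp[OF kappa_hom] neg_zero)
  qed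
  finally show ?case .
qed

lemma kpow_dop_top:
  "\<kappa>pow (Suc m) (Suc m) \<cdot> d m = csgn C (Suc m) (\<kappa>pow (Suc m) (Suc m) \<cdot> s m (Suc m))"
proof -
  have "d m = dgn_sum m 0 (Suc m) \<oplus> csgn C (Suc m) (s m (Suc m))"
    using dgn_sum_split[of 0 "Suc m" "Suc (Suc m)" m] by (simp add: dop_eq_dgn_sum dgn_sum_Suc)
  moreover have "\<kappa>pow (Suc m) (Suc m) \<cdot> dgn_sum m 0 (Suc m) = \<zero> m (Suc m)"
  proof -
    have "\<kappa>pow (Suc m) (Suc m) \<cdot> dgn_sum m 0 (Suc m) =
      csum C (Mo m) (Mo (Suc m)) (\<lambda>i. \<kappa>pow (Suc m) (Suc m) \<cdot> csgn C i (s m i)) (Suc m)"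
      unfolding dgn_sum_0 by (rule cmp_csum) (auto intro: csgn_hom)
    also have "\<dots> = \<zero> m (Suc m)"
      by (rule csum_zero) (simp_all add: cmp_csgn[OF dgn_hom kpow_hom] kpow_dgn csgn_zero)
    finally show ?thesis .
  qed
  ultimately show ?thesis
    by (simp add: cmp_add[OF dgn_sum_hom csgn_hom[OF dgn_hom] kpow_hom]
      cmp_csgn[OF dgn_hom kpow_hom] add_zero_left[OF csgn_hom[OF cmp_hom[OF dgn_hom kpow_hom]]])
qed

lemma face_sum_dgn_top:
  "face_sum (Suc m) (Suc (Suc m)) \<cdot> s (Suc m) (Suc (Suc m)) =
    csgn C (Suc m) (\<kappa> (Suc m)) \<oplus> s m (Suc m) \<cdot> b (Suc m)"
proof -
  let ?T = "\<lambda>n. csum C (Mo (Suc n)) (Mo n) (\<lambda>i. csgn C (Suc i) (\<partial> (Suc n) (Suc i))) (Suc m)"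
  have T_hom: "?T m \<in> Hom C (Mo (Suc m)) (Mo m)"
    "?T (Suc m) \<in> Hom C (Mo (Suc (Suc m))) (Mo (Suc m))"
    by (auto intro!: csum_hom csgn_hom)
  have tails: "?T (Suc m) \<cdot> s (Suc m) (Suc (Suc m)) = s m (Suc m) \<cdot> ?T m"
  proof -
    have "?T (Suc m) \<cdot> s (Suc m) (Suc (Suc m)) =
      csum C (Mo (Suc m)) (Mo (Suc m))
      (\<lambda>i. csgn C (Suc i) (\<partial> (Suc (Suc m)) (Suc i)) \<cdot> s (Suc m) (Suc (Suc m))) (Suc m)"
      by (rule csum_cmp) (auto intro: csgn_hom)
    also have "\<dots> =
        csum C (Mo (Suc m)) (Mo (Suc m)) (\<lambda>i. s m (Suc m) \<cdot> csgn C (Suc i) (\<partial> (Suc m) (Suc i)))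
      (Suc m)"
      using face_dgn_less[of "Suc _" "Suc (Suc m)" m]
      by (intro csum_cong) (simp add: csgn_cmp[OF dgn_hom face_hom] cmp_csgn[OF face_hom dgn_hom])
    also have "\<dots> = s m (Suc m) \<cdot> ?T m"
      by (rule cmp_csum[symmetric]) (auto intro: csgn_hom)
    finally show ?thesis .
  qed
  have "face_sum (Suc m) (Suc (Suc m)) = csgn C 0 (\<partial> (Suc (Suc m)) 0) \<oplus> ?T (Suc m)"
    unfolding face_sum_def by (rule csum_Suc_shift) (auto intro: csgn_hom)
  then have
    "face_sum (Suc m) (Suc (Suc m)) \<cdot> s (Suc m) (Suc (Suc m)) = \<tau> (Suc m) \<oplus> s m (Suc m) \<cdot> ?T m"
    using tails T_hom by (simp add: add_cmp[OF dgn_hom face_hom])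
  also have "\<dots> = \<tau> (Suc m) \<oplus> \<ominus> (s m (Suc m) \<cdot> \<partial> (Suc m) 0)
    \<oplus> (s m (Suc m) \<cdot> \<partial> (Suc m) 0 \<oplus> s m (Suc m) \<cdot> ?T m)"
    using T_hom by (intro diff_add_add_cancel[symmetric]) (auto intro: cmp_hom[OF _ dgn_hom])
  also have "\<tau> (Suc m) \<oplus> \<ominus> (s m (Suc m) \<cdot> \<partial> (Suc m) 0) = csgn C (Suc m) (\<kappa> (Suc m))"
    by (simp add: kappa_Suc csgn_csgn[OF add_hom[OF tau_hom neg_hom[OF dgn_face_hom]]])
  also have "s m (Suc m) \<cdot> \<partial> (Suc m) 0 \<oplus> s m (Suc m) \<cdot> ?T m = s m (Suc m) \<cdot> b (Suc m)"
  proof -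
    have "b (Suc m) = csgn C 0 (\<partial> (Suc m) 0) \<oplus> ?T m"
      unfolding bop_eq by (rule csum_Suc_shift) (auto intro: csgn_hom)
    then show ?thesis using T_hom by (simp add: cmp_add[OF face_hom _ dgn_hom])
  qed
  finally show ?thesis .
qed

lemma piop_0: "\<pi> 0 = \<kappa> 0"
  unfolding piop_def kappa_0 by (simp add: id_cmp[OF dgn_hom])

lemma piop_Suc: "\<pi> (Suc m) = \<kappa>pow (Suc m) (Suc (Suc m)) \<oplus> \<kappa>pow (Suc m) (Suc m) \<cdot> (d m \<cdot> b (Suc m))"
proof -
  let ?K = "\<kappa>pow (Suc m) (Suc m)"
  have "\<partial> (Suc (Suc m)) 0 \<cdot> (\<kappa>pow (Suc (Suc m)) (Suc m) \<cdot> s (Suc m) (Suc (Suc m))) =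
    ?K \<cdot> (face_sum (Suc m) (Suc (Suc m)) \<cdot> s (Suc m) (Suc (Suc m)))"
    using face_0_kpow[of "Suc m" "Suc m"]
    by (simp add: cmp_assoc[OF dgn_hom kpow_hom face_hom]
      cmp_assoc[OF dgn_hom face_sum_hom kpow_hom])
  also have "\<dots> = csgn C (Suc m) (?K \<cdot> \<kappa> (Suc m)) \<oplus> ?K \<cdot> (s m (Suc m) \<cdot> b (Suc m))"
    by (simp add: face_sum_dgn_top
      cmp_add[OF csgn_hom[OF kappa_hom] cmp_hom[OF bop_hom dgn_hom] kpow_hom]
      cmp_csgn[OF kappa_hom kpow_hom])
  finally have "\<pi> (Suc m) = ?K \<cdot> \<kappa> (Suc m) \<oplus> csgn C (Suc m) (?K \<cdot> (s m (Suc m) \<cdot> b (Suc m)))"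
    unfolding piop_def
    by (simp add:
      csgn_add[OF csgn_hom[OF cmp_hom[OF kappa_hom kpow_hom]]
      cmp_hom[OF cmp_hom[OF bop_hom dgn_hom] kpow_hom]]
      csgn_csgn[OF cmp_hom[OF kappa_hom kpow_hom]])
  also have "csgn C (Suc m) (?K \<cdot> (s m (Suc m) \<cdot> b (Suc m))) = ?K \<cdot> (d m \<cdot> b (Suc m))"
    by (simp add: kpow_dop_top cmp_assoc[OF bop_hom dgn_hom kpow_hom]
      cmp_assoc[OF bop_hom dop_hom kpow_hom] csgn_cmp[OF bop_hom cmp_hom[OF dgn_hom kpow_hom]])
  finally show ?thesis by (simp add: kpow_Suc_right)
qed

subsection \<open>The homotopy \<open>D\<close>\<close>

definition kpow_sum :: "nat \<Rightarrow> nat \<Rightarrow> 'm" where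
  "kpow_sum n k = csum C (Mo n) (Mo n) (\<kappa>pow n) k"

lemma kpow_sum_hom [simp]: "kpow_sum n k \<in> Hom C (Mo n) (Mo n)"
  unfolding kpow_sum_def by (rule csum_hom) auto

lemma kpow_sum_Suc: "kpow_sum n (Suc k) = kpow_sum n k \<oplus> \<kappa>pow n k"
  unfolding kpow_sum_def by (rule csum_Suc) auto

lemma Dop_eq: "D (Suc m) = b (Suc m) \<cdot> kpow_sum (Suc m) (Suc m)"
  unfolding Dop_def kpow_sum_def by (simp, rule cmp_csum[symmetric]) auto

lemma kpow_sum_bop: "kpow_sum n k \<cdot> b (Suc n) = b (Suc n) \<cdot> kpow_sum (Suc n) k"
proof -
  have "kpow_sum n k \<cdot> b (Suc n) = csum C (Mo (Suc n)) (Mo n) (\<lambda>i. \<kappa>pow n i \<cdot> b (Suc n)) k"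
    unfolding kpow_sum_def by (rule csum_cmp) auto
  also have "\<dots> = csum C (Mo (Suc n)) (Mo n) (\<lambda>i. b (Suc n) \<cdot> \<kappa>pow (Suc n) i) k"
    by (simp add: kpow_bop)
  also have "\<dots> = b (Suc n) \<cdot> kpow_sum (Suc n) k"
    unfolding kpow_sum_def by (rule cmp_csum[symmetric]) auto
  finally show ?thesis .
qed

lemma kpow_sum_dop: "kpow_sum (Suc n) k \<cdot> d n = d n \<cdot> kpow_sum n k"
proof -
  have "kpow_sum (Suc n) k \<cdot> d n = csum C (Mo n) (Mo (Suc n)) (\<lambda>i. \<kappa>pow (Suc n) i \<cdot> d n) k"
    unfolding kpow_sum_def by (rule csum_cmp) auto
  also have "\<dots> = csum C (Mo n) (Mo (Suc n)) (\<lambda>i. d n \<cdot> \<kappa>pow n i) k"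
    by (simp add: kpow_dop)
  also have "\<dots> = d n \<cdot> kpow_sum n k"
    unfolding kpow_sum_def by (rule cmp_csum[symmetric]) auto
  finally show ?thesis .
qed

lemma id_diff_kappa_kpow_sum: "(\<one> n \<oplus> \<ominus> \<kappa> n) \<cdot> kpow_sum n k = \<one> n \<oplus> \<ominus> \<kappa>pow n k"
proof -
  have "(\<one> n \<oplus> \<ominus> \<kappa> n) \<cdot> kpow_sum n k = csum C (Mo n) (Mo n) (\<lambda>i. (\<one> n \<oplus> \<ominus> \<kappa> n) \<cdot> \<kappa>pow n i) k"
    unfolding kpow_sum_def
    by (rule cmp_csum) (auto intro: add_hom[OF one_hom neg_hom[OF kappa_hom]])
  also have "\<dots> = csum C (Mo n) (Mo n) (\<lambda>i. \<kappa>pow n i \<oplus> \<ominus> \<kappa>pow n (Suc i)) k"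
    by (simp add: diff_cmp[OF kpow_hom one_hom kappa_hom] id_cmp[OF kpow_hom] kpow_Suc)
  also have "\<dots> = \<one> n \<oplus> \<ominus> \<kappa>pow n k"
    by (simp add: csum_telescope)
  finally show ?thesis .
qed

lemma Dop_dop_0: "D (Suc 0) \<cdot> d 0 = \<one> 0 \<oplus> \<ominus> \<pi> 0"
  by (simp add: Dop_eq kpow_sum_def csum_one cmp_id[OF bop_hom] bop_dop_0 piop_0)

lemma dop_Dop_add_Dop_dop:
  "d m \<cdot> D (Suc m) \<oplus> D (Suc (Suc m)) \<cdot> d (Suc m) = \<one> (Suc m) \<oplus> \<ominus> \<pi> (Suc m)"
proof -
  let ?Y = "d m \<cdot> b (Suc m)" and ?K = "\<kappa>pow (Suc m)"
  have Y: "?Y \<in> Hom C (Mo (Suc m)) (Mo (Suc m))" by (rule cmp_hom[OF bop_hom dop_hom])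
  have dD: "d m \<cdot> D (Suc m) = ?Y \<cdot> kpow_sum (Suc m) (Suc m)"
    by (simp add: Dop_eq cmp_assoc[OF kpow_sum_hom bop_hom dop_hom])
  have "D (Suc (Suc m)) \<cdot> d (Suc m)
    = (\<one> (Suc m) \<oplus> \<ominus> \<kappa> (Suc m) \<oplus> \<ominus> ?Y) \<cdot> kpow_sum (Suc m) (Suc (Suc m))"
    using eq_diff_add[OF cmp_hom[OF dop_hom bop_hom] cmp_hom[OF bop_hom dop_hom]
      bop_dop_add_dop_bop[of m]]
    by (simp add: Dop_eq kpow_sum_dop cmp_assoc[OF dop_hom kpow_sum_hom bop_hom, symmetric]
      cmp_assoc[OF kpow_sum_hom dop_hom bop_hom])
  also have "\<dots> = (\<one> (Suc m) \<oplus> \<ominus> \<kappa> (Suc m)) \<cdot> kpow_sum (Suc m) (Suc (Suc m))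
    \<oplus> \<ominus> (?Y \<cdot> kpow_sum (Suc m) (Suc (Suc m)))"
    by (rule diff_cmp[OF kpow_sum_hom add_hom[OF one_hom neg_hom[OF kappa_hom]] Y])
  also have "?Y \<cdot> kpow_sum (Suc m) (Suc (Suc m)) = ?Y \<cdot> kpow_sum (Suc m) (Suc m) \<oplus> ?Y \<cdot> ?K (Suc m)"
    unfolding kpow_sum_Suc[of "Suc m" "Suc m"] by (rule cmp_add[OF kpow_sum_hom kpow_hom Y])
  finally have "D (Suc (Suc m)) \<cdot> d (Suc m) =
    \<one> (Suc m) \<oplus> \<ominus> ?K (Suc (Suc m)) \<oplus> \<ominus> (?Y \<cdot> kpow_sum (Suc m) (Suc m) \<oplus> ?Y \<cdot> ?K (Suc m))"
    by (simp add: id_diff_kappa_kpow_sum)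
  then have "d m \<cdot> D (Suc m) \<oplus> D (Suc (Suc m)) \<cdot> d (Suc m) =
    \<one> (Suc m) \<oplus> \<ominus> (?K (Suc (Suc m)) \<oplus> ?Y \<cdot> ?K (Suc m))"
    unfolding dD using add_diff_add_left_cancel[OF cmp_hom[OF kpow_sum_hom Y] one_hom kpow_hom
      cmp_hom[OF kpow_hom Y]] by simp
  also have "?Y \<cdot> ?K (Suc m) = ?K (Suc m) \<cdot> ?Y"
    by (simp add: cmp_assoc[OF kpow_hom bop_hom dop_hom, symmetric] kpow_bop[symmetric]
      cmp_assoc[OF bop_hom kpow_hom dop_hom] kpow_dop[symmetric]
      cmp_assoc[OF bop_hom dop_hom kpow_hom])
  finally show ?thesis by (simp add: piop_Suc)
qed

lemma Dop_Dop: "D (Suc p) \<cdot> D (Suc (Suc p)) = \<zero> (Suc (Suc p)) p"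
proof -
  let ?S = "kpow_sum (Suc p) (Suc p)" and ?S' = "kpow_sum (Suc (Suc p)) (Suc (Suc p))"
  have "D (Suc p) \<cdot> D (Suc (Suc p)) = b (Suc p) \<cdot> (?S \<cdot> b (Suc (Suc p))) \<cdot> ?S'"
    by (simp add: Dop_eq cmp_assoc[OF kpow_sum_hom bop_hom cmp_hom[OF kpow_sum_hom bop_hom]]
      cmp_assoc[OF bop_hom kpow_sum_hom bop_hom])
  also have "\<dots> = b (Suc p) \<cdot> b (Suc (Suc p)) \<cdot> (kpow_sum (Suc (Suc p)) (Suc p) \<cdot> ?S')"
    by (simp add: kpow_sum_bop cmp_assoc[OF kpow_sum_hom bop_hom bop_hom]
      cmp_assoc[OF kpow_sum_hom kpow_sum_hom cmp_hom[OF bop_hom bop_hom], symmetric])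
  also have "\<dots> = \<zero> (Suc (Suc p)) p"
    by (simp add: bop_bop zero_cmp[OF cmp_hom[OF kpow_sum_hom kpow_sum_hom] Mo_obj])
  finally show ?thesis .
qed

end

theorem mainTheorem18:
  fixes C :: "('o, 'm, 'z) preadd_cat_scheme"
    and Mo :: "nat \<Rightarrow> 'o"
    and Mf :: "nat \<Rightarrow> nat \<Rightarrow> (int \<Rightarrow> int) \<Rightarrow> 'm"
  assumes "duplicial C Mo Mf"
  shows "(\<forall>n. Add C (if n = 0 then Zer C (Mo 0) (Mo 0)
                     else Cmp C (dop C Mo Mf (n - 1)) (Dop C Mo Mf n))
                  (Cmp C (Dop C Mo Mf (n + 1)) (dop C Mo Mf n))
            = Add C (Idm C (Mo n)) (Neg C (piop C Mo Mf n))) \<and>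
         (\<forall>n\<ge>2. Cmp C (Dop C Mo Mf (n - 1)) (Dop C Mo Mf n) = Zer C (Mo n) (Mo (n - 2)))"
proof -
  interpret duplicial_module C Mo Mf
    using assms by unfold_locales (simp_all add: duplicial_def)
  have homotopy:
    "(if n = 0 then \<zero> 0 0 else d (n - 1) \<cdot> D n) \<oplus> D (n + 1) \<cdot> d n = \<one> n \<oplus> \<ominus> \<pi> n" for n
    by (cases n) (simp_all add: Dop_dop_0 piop_0 dop_Dop_add_Dop_dop
        add_zero_left[OF add_hom[OF one_hom neg_hom[OF kappa_hom]]])
  have square_zero: "D (n - 1) \<cdot> D n = \<zero> n (n - 2)" if "2 \<le> n" for n
    using that Dop_Dop[of "n - 2"] by (simp add: numeral_2_eq_2 Suc_diff_Suc)
  show ?thesis using homotopy square_zero by simp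
qed

end
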